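(* Let $M=(\mathcal{S},\mathcal{A},r,p)$ be a weakly communicating MDP with $S=|\mathcal{S}|$ states and $A=|\mathcal{A}|$ actions, optimal average reward $J^*$ and optimal bias function $v^*$ with span $\mathrm{sp}(v^* )$ (defined in the context). Let $T$ be the horizon and $\delta\in(0,1)$. Run Optimistic Q-learning (defined in the context) with confidence level $\delta$ and $$H=\min\left\{\sqrt{\frac{\mathrm{sp}(v^* )\,T}{SA}},\ \left(\frac{T}{SA\ln\frac{4T}{\delta}}\right)^{1/3}\right\}.$$ Then with probability at least $1-\delta$ the regret $R_T=\sum_{t=1}^T\big(J^*-r(s_t,a_t)\big)$ satisfies $$R_T=O\left(\sqrt{\mathrm{sp}(v^* )SAT}+\mathrm{sp}(v^* )\left(T^{2/3}\left(SA\ln\tfrac{T}{\delta}\right)^{1/3}+\sqrt{T\ln\tfrac{1}{\delta}}\right)\right),$$ where $O(\cdot)$ hides an absolute constant.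
   Context: An MDP $(\mathcal{S},\mathcal{A},r,p)$ has finite state set $\mathcal{S}$, finite action set $\mathcal{A}$, known reward $r:\mathcal{S}\times\mathcal{A}\to[0,1]$ and unknown transition kernel $p(s'|s,a)$. It is weakly communicating if $\mathcal{S}$ can be partitioned into a set of states that are transient under every stationary policy and a set in which every two states are accessible from each other under some stationary policy. For such MDPs there exist a unique $J^*\in[0,1]$ (the optimal long-run average reward, the same from every start state) and $q^*:\mathcal{S}\times\mathcal{A}\to\mathbb{R}$ (unique up to an additive constant) with $J^*+q^*(s,a)=r(s,a)+\mathbb{E}_{s'\sim p(\cdot|s,a)}[v^*(s')]$, where $v^*(s)=\max_a q^*(s,a)$; $\mathrm{sp}(v^* )=\max_s v^*(s)-\min_s v^*(s)$. The learner starts at an arbitrary $s_1$, at each step $t$ picks $a_t$ based on the history, and $s_{t+1}\sim p(\cdot|s_t,a_t)$. Optimistic Q-learning with parameters $H\ge 2$ and $\delta\in(0,1)$ (and known $T$, $\mathrm{sp}(v^* )$): set $\gamma=1-1/H$, $\hat V_1(s)=H$ for all $s$, $Q_1(s,a)=\hat Q_1(s,a)=H$, $n_1(s,a)=0$ for all $(s,a)$; let $\alpha_\tau=\frac{H+1}{H+\tau}$ and $b_\tau=4\,\mathrm{sp}(v^* )\sqrt{\frac{H}{\tau}\ln\frac{2T}{\delta}}$. For $t=1,\dots,T$: take $a_t\in\arg\max_a\hat Q_t(s_t,a)$, observe $s_{t+1}$; set $n_{t+1}(s_t,a_t)=n_t(s_t,a_t)+1$, $\tau=n_{t+1}(s_t,a_t)$,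 $Q_{t+1}(s_t,a_t)=(1-\alpha_\tau)Q_t(s_t,a_t)+\alpha_\tau[r(s_t,a_t)+\gamma\hat V_t(s_{t+1})+b_\tau]$, $\hat Q_{t+1}(s_t,a_t)=\min\{\hat Q_t(s_t,a_t),Q_{t+1}(s_t,a_t)\}$, $\hat V_{t+1}(s_t)=\max_a\hat Q_{t+1}(s_t,a)$; all other entries of $n,Q,\hat Q,\hat V$ are unchanged. *)

theory Defs
  imports "HOL-Probability.Probability"
begin

text \<open>MDP with state set {..<nS} and action set {..<nA} (natural-number carriers,
  so that the constant in the regret bound can be quantified outside all MDP data).\<close>

definition mdp_wf :: "nat \<Rightarrow> nat \<Rightarrow> (nat \<Rightarrow> nat \<Rightarrow> real) \<Rightarrow> (nat \<Rightarrow> nat \<Rightarrow> nat pmf) \<Rightarrow> bool" where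
  "mdp_wf nS nA r p \<longleftrightarrow> 0 < nS \<and> 0 < nA \<and>
     (\<forall>s<nS. \<forall>a<nA. 0 \<le> r s a \<and> r s a \<le> 1 \<and> set_pmf (p s a) \<subseteq> {..<nS})"

definition stat_policy :: "nat \<Rightarrow> nat \<Rightarrow> (nat \<Rightarrow> nat pmf) \<Rightarrow> bool" where
  "stat_policy nS nA \<pi> \<longleftrightarrow> (\<forall>s<nS. set_pmf (\<pi> s) \<subseteq> {..<nA})"

definition chain_kernel :: "(nat \<Rightarrow> nat \<Rightarrow> nat pmf) \<Rightarrow> (nat \<Rightarrow> nat pmf) \<Rightarrow> nat \<Rightarrow> nat pmf" where
  "chain_kernel p \<pi> s = bind_pmf (\<pi> s) (\<lambda>a. p s a)"

fun chain_dist :: "(nat \<Rightarrow> nat \<Rightarrow> nat pmf) \<Rightarrow> (nat \<Rightarrow> nat pmf) \<Rightarrow> nat \<Rightarrow> nat \<Rightarrow> nat pmf" where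
  "chain_dist p \<pi> 0 s = return_pmf s"
| "chain_dist p \<pi> (Suc n) s = bind_pmf (chain_dist p \<pi> n s) (chain_kernel p \<pi>)"

definition accessible :: "(nat \<Rightarrow> nat \<Rightarrow> nat pmf) \<Rightarrow> (nat \<Rightarrow> nat pmf) \<Rightarrow> nat \<Rightarrow> nat \<Rightarrow> bool" where
  "accessible p \<pi> s s' \<longleftrightarrow> (\<exists>n. pmf (chain_dist p \<pi> n s) s' > 0)"

text \<open>hit_within p \<pi> tgt n x: probability that the chain started at x visits tgt
  at some time 1..n.\<close>
fun hit_within :: "(nat \<Rightarrow> nat \<Rightarrow> nat pmf) \<Rightarrow> (nat \<Rightarrow> nat pmf) \<Rightarrow> nat \<Rightarrow> nat \<Rightarrow> nat \<Rightarrow> real" where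
  "hit_within p \<pi> tgt 0 x = 0"
| "hit_within p \<pi> tgt (Suc n) x =
     measure_pmf.expectation (chain_kernel p \<pi> x) (\<lambda>y. if y = tgt then 1 else hit_within p \<pi> tgt n y)"

definition transient :: "(nat \<Rightarrow> nat \<Rightarrow> nat pmf) \<Rightarrow> (nat \<Rightarrow> nat pmf) \<Rightarrow> nat \<Rightarrow> bool" where
  "transient p \<pi> s \<longleftrightarrow> (SUP n. hit_within p \<pi> s n s) < 1"

definition weakly_communicating :: "nat \<Rightarrow> nat \<Rightarrow> (nat \<Rightarrow> nat \<Rightarrow> nat pmf) \<Rightarrow> bool" where
  "weakly_communicating nS nA p \<longleftrightarrow>
     (\<exists>Tr C. Tr \<inter> C = {} \<and> Tr \<union> C = {..<nS} \<and>
        (\<forall>s\<in>Tr. \<forall>\<pi>. stat_policy nS nA \<pi> \<longrightarrow> transient p \<pi> s) \<and>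
        (\<forall>s\<in>C. \<forall>s'\<in>C. \<exists>\<pi>. stat_policy nS nA \<pi> \<and> accessible p \<pi> s s'))"

definition vfun :: "nat \<Rightarrow> (nat \<Rightarrow> nat \<Rightarrow> real) \<Rightarrow> nat \<Rightarrow> real" where
  "vfun nA q s = Max ((\<lambda>a. q s a) ` {..<nA})"

definition bellman :: "nat \<Rightarrow> nat \<Rightarrow> (nat \<Rightarrow> nat \<Rightarrow> real) \<Rightarrow> (nat \<Rightarrow> nat \<Rightarrow> nat pmf)
    \<Rightarrow> real \<Rightarrow> (nat \<Rightarrow> nat \<Rightarrow> real) \<Rightarrow> bool" where
  "bellman nS nA r p J q \<longleftrightarrow>
     (\<forall>s<nS. \<forall>a<nA. J + q s a = r s a + measure_pmf.expectation (p s a) (vfun nA q))"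

definition span :: "nat \<Rightarrow> (nat \<Rightarrow> real) \<Rightarrow> real" where
  "span nS v = Max (v ` {..<nS}) - Min (v ` {..<nS})"

text \<open>Algorithm state: (history of (s_t,a_t), current state,
  counts n, Q, Qhat, Vhat). Ties in the argmax are broken by a selector sel, which may
  depend on the history, the current state and the row Qhat(s,.).\<close>

type_synonym qstate =
  "(nat \<times> nat) list \<times> nat \<times> (nat \<Rightarrow> nat \<Rightarrow> nat) \<times> (nat \<Rightarrow> nat \<Rightarrow> real) \<times> (nat \<Rightarrow> nat \<Rightarrow> real) \<times> (nat \<Rightarrow> real)"

definition ql_alpha :: "real \<Rightarrow> nat \<Rightarrow> real" where
  "ql_alpha H \<tau> = (H + 1) / (H + real \<tau>)"

definition ql_bonus :: "real \<Rightarrow> nat \<Rightarrow> real \<Rightarrow> real \<Rightarrow> nat \<Rightarrow> real" where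
  "ql_bonus sp T \<delta> H \<tau> = 4 * sp * sqrt (H / real \<tau> * ln (2 * real T / \<delta>))"

definition ql_init :: "real \<Rightarrow> nat \<Rightarrow> qstate" where
  "ql_init H s1 = ([], s1, (\<lambda>_ _. 0), (\<lambda>_ _. H), (\<lambda>_ _. H), (\<lambda>_. H))"

definition ql_step :: "nat \<Rightarrow> (nat \<Rightarrow> nat \<Rightarrow> real) \<Rightarrow> (nat \<Rightarrow> nat \<Rightarrow> nat pmf)
    \<Rightarrow> real \<Rightarrow> nat \<Rightarrow> real \<Rightarrow> real
    \<Rightarrow> ((nat \<times> nat) list \<Rightarrow> nat \<Rightarrow> (nat \<Rightarrow> real) \<Rightarrow> nat)
    \<Rightarrow> qstate \<Rightarrow> qstate pmf" where
  "ql_step nA r p sp T \<delta> H sel st =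
     (case st of (h, s, n, Q, Qh, V) \<Rightarrow>
       let a = sel h s (\<lambda>b. Qh s b);
           \<gamma> = 1 - 1 / H;
           \<tau> = n s a + 1
       in map_pmf (\<lambda>s'.
            let q' = (1 - ql_alpha H \<tau>) * Q s a
                     + ql_alpha H \<tau> * (r s a + \<gamma> * V s' + ql_bonus sp T \<delta> H \<tau>);
                n' = n(s := (n s)(a := \<tau>));
                Q' = Q(s := (Q s)(a := q'));
                Qh' = Qh(s := (Qh s)(a := min (Qh s a) q'));
                V' = V(s := Max ((\<lambda>b. Qh' s b) ` {..<nA}))
            in (h @ [(s, a)], s', n', Q', Qh', V')) (p s a))"

fun ql_run :: "nat \<Rightarrow> (nat \<Rightarrow> nat \<Rightarrow> real) \<Rightarrow> (nat \<Rightarrow> nat \<Rightarrow> nat pmf)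
    \<Rightarrow> real \<Rightarrow> nat \<Rightarrow> real \<Rightarrow> real
    \<Rightarrow> ((nat \<times> nat) list \<Rightarrow> nat \<Rightarrow> (nat \<Rightarrow> real) \<Rightarrow> nat) \<Rightarrow> nat \<Rightarrow> nat \<Rightarrow> qstate pmf" where
  "ql_run nA r p sp T \<delta> H sel s1 0 = return_pmf (ql_init H s1)"
| "ql_run nA r p sp T \<delta> H sel s1 (Suc k) =
     bind_pmf (ql_run nA r p sp T \<delta> H sel s1 k) (ql_step nA r p sp T \<delta> H sel)"

definition regret :: "(nat \<Rightarrow> nat \<Rightarrow> real) \<Rightarrow> real \<Rightarrow> (nat \<times> nat) list \<Rightarrow> real" where
  "regret r J h = (\<Sum>(s, a) \<leftarrow> h. J - r s a)"

end

theory Submission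
  imports Defs
begin

(* Optimistic Q-learning is compared with the discounted problem with discount factor
   \<gamma> = 1 - 1/H.  The shifted bias Vref = v* - max v* + H J* is a sub-solution of the discounted
   Bellman equation at the greedy actions of q*, and J* - Vref/H \<le> sp/H, sp being the span of v*.
   Every Q-estimate is a learning-rate weighted average of its targets r + \<gamma> Vhat(s') + bonus.
   As long as the weighted sums of the noise Vref(s_{t+1}) - (P Vref)(s_t, a_t) are dominated by
   the bonuses, induction over time shows that the estimates stay optimistic, Qhat \<ge> r + \<gamma> P Vref.
   The regret then splits into T sp/H, a telescoping term, a martingale term of order
   sp sqrt(T ln(1/\<delta>)) and the optimism gaps Qhat - (r + \<gamma> P Vref) along the trajectory.  Each
   sample carries total weight at most 1 + 1/H in all later estimates and \<gamma> (1 + 1/H) \<le> 1, so the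
   gaps sum to O(SA (H + sp)) plus the sum of bonuses, which is O(sp sqrt(H SA T ln(T/\<delta>))).
   Azuma's inequality, with a union bound over (s, a, \<tau>, sign), shows that the good event has
   probability at least 1 - \<delta>, and the choice of H balances T sp/H against the bonus term. *)

lemma sum_inverse_sqrt_le: "(\<Sum>j<N. 1 / sqrt (real (Suc j))) \<le> 2 * sqrt (real N)"
proof (induction N)
  case 0 then show ?case by simp
next
  case (Suc N)
  define a where "a = sqrt (real N)"
  define b where "b = sqrt (real (Suc N))"
  have b0: "b > 0" unfolding b_def by simp
  have sq: "b * b - a * a = 1" unfolding a_def b_def by simp
  have "2 * a * b \<le> a * a + b * b" using sum_squares_bound[of a b] by (simp add: power2_eq_square)
  then have "1 \<le> 2 * b * (b - a)" using sq by (simp add: algebra_simps)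
  then have "1 / b \<le> 2 * (b - a)" using b0 by (simp add: field_simps)
  then show ?case using Suc unfolding a_def b_def by simp
qed

lemma sum_lessThan_triangle_swap:
  fixes f :: "nat \<Rightarrow> nat \<Rightarrow> real"
  shows "(\<Sum>t<T. \<Sum>i<t. f i t) = (\<Sum>i<T. \<Sum>t\<in>{Suc i..<T}. f i t)"
proof (induction T)
  case 0 then show ?case by simp
next
  case (Suc T)
  have "(\<Sum>i<Suc T. \<Sum>t\<in>{Suc i..<Suc T}. f i t) = (\<Sum>i<T. \<Sum>t\<in>{Suc i..<Suc T}. f i t)"
    by simp
  also have "\<dots> = (\<Sum>i<T. (\<Sum>t\<in>{Suc i..<T}. f i t) + f i T)"
    by (rule sum.cong) auto
  also have "\<dots> = (\<Sum>i<T. \<Sum>t\<in>{Suc i..<T}. f i t) + (\<Sum>i<T. f i T)"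
    by (simp add: sum.distrib)
  finally show ?case using Suc by simp
qed

lemma powr_one_third_power_3: "0 < x \<Longrightarrow> (x powr (1/3)) ^ 3 = (x::real)"
  by (simp add: powr_realpow[symmetric] powr_powr)

lemma power_3_le_imp_le: "0 \<le> (y::real) \<Longrightarrow> x ^ 3 \<le> y ^ 3 \<Longrightarrow> x \<le> y"
  using power_le_imp_le_base[of x 2 y] by (simp add: numeral_3_eq_3)

lemma ln_gt_1: "4 \<le> (x::real) \<Longrightarrow> 1 < ln x"
proof -
  assume "4 \<le> x"
  moreover have "exp 1 < (4::real)" using exp_le by simp
  ultimately have "ln (exp 1) < ln x" by (subst ln_less_cancel_iff) auto
  then show ?thesis by simp
qed

lemma expectation_pmf_mono:
  fixes f g :: "'a \<Rightarrow> real"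
  assumes "finite (set_pmf M)" "\<And>x. x \<in> set_pmf M \<Longrightarrow> f x \<le> g x"
  shows "measure_pmf.expectation M f \<le> measure_pmf.expectation M g"
  by (rule integral_mono_AE) (auto simp: AE_measure_pmf_iff integrable_measure_pmf_finite assms)

lemma expectation_pmf_le_const:
  fixes f :: "'a \<Rightarrow> real"
  assumes "finite (set_pmf M)" "\<And>x. x \<in> set_pmf M \<Longrightarrow> f x \<le> c"
  shows "measure_pmf.expectation M f \<le> c"
  using expectation_pmf_mono[OF assms(1), of f "\<lambda>_. c"] assms(2) by simp

lemma expectation_pmf_ge_const:
  fixes f :: "'a \<Rightarrow> real"
  assumes "finite (set_pmf M)" "\<And>x. x \<in> set_pmf M \<Longrightarrow> c \<le> f x"
  shows "c \<le> measure_pmf.expectation M f"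
  using expectation_pmf_mono[OF assms(1), of "\<lambda>_. c" f] assms(2) by simp

lemma expectation_pmf_add_const:
  fixes f :: "'a \<Rightarrow> real"
  assumes "finite (set_pmf M)"
  shows "measure_pmf.expectation M (\<lambda>x. f x + c) = measure_pmf.expectation M f + c"
  by (subst Bochner_Integration.integral_add) (auto simp: integrable_measure_pmf_finite assms)

text \<open>Unlike \<open>Hoeffdings_lemma_nn_integral\<close>, this holds for both signs of \<open>l\<close>.\<close>

lemma hoeffding_lemma_pmf:
  fixes M :: "'a pmf" and f :: "'a \<Rightarrow> real"
  assumes rng: "\<And>x. x \<in> set_pmf M \<Longrightarrow> a \<le> f x \<and> f x \<le> b"
  shows "(\<integral>\<^sup>+x. ennreal (exp (l * (f x - measure_pmf.expectation M f))) \<partial>M)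
    \<le> ennreal (exp (l\<^sup>2 * (b - a)\<^sup>2 / 8))"
proof (cases "l > 0")
  case True
  interpret interval_bounded_random_variable "measure_pmf M" f a b
    by unfold_locales (auto simp: AE_measure_pmf_iff rng)
  show ?thesis by (rule Hoeffdings_lemma_nn_integral[OF True])
next
  case False
  show ?thesis
  proof (cases "l = 0")
    case True then show ?thesis by (simp add: emeasure_pmf)
  next
    case False
    then have l: "- l > 0" using \<open>\<not> l > 0\<close> by simp
    interpret interval_bounded_random_variable "measure_pmf M" "\<lambda>x. - f x" "- b" "- a"
      by unfold_locales (auto simp: AE_measure_pmf_iff rng)
    have "(\<integral>\<^sup>+x. ennreal (exp ((- l) * (- f x - measure_pmf.expectation M (\<lambda>x. - f x)))) \<partial>M)
        \<le> ennreal (exp ((- l)\<^sup>2 * (- a - - b)\<^sup>2 / 8))"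
      by (rule Hoeffdings_lemma_nn_integral[OF l])
    then show ?thesis by (simp add: algebra_simps power2_commute)
  qed
qed

section \<open>Learning-rate weights\<close>

text \<open>\<^term>\<open>lr_weight H i \<tau>\<close> is the weight \<open>\<alpha>\<^sub>i \<Prod>\<^sub>j\<^sub>=\<^sub>i\<^sub>+\<^sub>1\<^sup>\<tau> (1 - \<alpha>\<^sub>j)\<close> with which the \<open>i\<close>-th target
  enters a Q-estimate after \<open>\<tau>\<close> updates.\<close>

fun lr_weight :: "real \<Rightarrow> nat \<Rightarrow> nat \<Rightarrow> real" where
  "lr_weight H i 0 = 0"
| "lr_weight H i (Suc m) =
     (if i = Suc m then ql_alpha H (Suc m) else (1 - ql_alpha H (Suc m)) * lr_weight H i m)"

lemma lr_weight_eq_0: "m < i \<Longrightarrow> lr_weight H i m = 0"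
  by (induction m) auto

lemma one_minus_ql_alpha: "H > 0 \<Longrightarrow> 1 - ql_alpha H (Suc m) = real m / (H + real (Suc m))"
  unfolding ql_alpha_def by (simp add: field_simps)

lemma ql_alpha_nonneg: "H > 0 \<Longrightarrow> 0 \<le> ql_alpha H m"
  unfolding ql_alpha_def by simp

lemma lr_weight_nonneg: "H > 0 \<Longrightarrow> 0 \<le> lr_weight H i m"
proof (induction m)
  case (Suc m)
  then show ?case using one_minus_ql_alpha[of H m] ql_alpha_nonneg[of H "Suc m"] by auto
qed simp

lemma sum_lr_weight: "H > 0 \<Longrightarrow> 1 \<le> m \<Longrightarrow> (\<Sum>i<m. lr_weight H (Suc i) m) = 1"
proof (induction m)
  case 0 then show ?case by simp
next
  case (Suc m)
  show ?case
  proof (cases "m = 0")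
    case True then show ?thesis using Suc by (simp add: ql_alpha_def)
  next
    case False
    have "(\<Sum>i<Suc m. lr_weight H (Suc i) (Suc m))
        = (1 - ql_alpha H (Suc m)) * (\<Sum>i<m. lr_weight H (Suc i) m) + ql_alpha H (Suc m)"
      by (simp add: sum_distrib_left)
    then show ?thesis using Suc False by simp
  qed
qed

lemma lr_weight_le: "H > 0 \<Longrightarrow> lr_weight H i m \<le> (H + 1) / (H + real m)"
proof (induction m)
  case 0 then show ?case by simp
next
  case (Suc m)
  show ?case
  proof (cases "i = Suc m")
    case True then show ?thesis by (simp add: ql_alpha_def)
  next
    case False
    have "lr_weight H i (Suc m) = real m / (H + real (Suc m)) * lr_weight H i m"
      using False one_minus_ql_alpha[OF Suc.prems] by simp
    also have "\<dots> \<le> real m / (H + real (Suc m)) * ((H + 1) / (H + real m))"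
      by (rule mult_left_mono) (use Suc in auto)
    also have "\<dots> \<le> (H + 1) / (H + real (Suc m))"
    proof -
      have "real m / (H + real m) \<le> 1" using Suc.prems by simp
      then have "(H + 1) / (H + real (Suc m)) * (real m / (H + real m)) \<le> (H + 1) / (H + real (Suc m))"
        by (intro mult_left_le) (use Suc.prems in auto)
      then show ?thesis by (simp add: field_simps)
    qed
    finally show ?thesis .
  qed
qed

lemma sum_lr_weight_tail:
  assumes "H > 0" "1 \<le> i" "i \<le> N"
  shows "(\<Sum>m\<in>{i..N}. lr_weight H i m) = (1 + 1/H) - lr_weight H i N * real N / H"
  using assms(3)
proof (induction N rule: dec_induct)
  case base
  obtain i' where "i = Suc i'" using \<open>1 \<le> i\<close> by (cases i) auto
  then have "lr_weight H i i * (H + real i) = H + 1" using assms(1) by (simp add: ql_alpha_def)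
  then have "H * (lr_weight H i i * (H + real i)) = H * (H + 1)" by simp
  then show ?case using assms(1) by (simp add: field_simps)
next
  case (step n)
  have "lr_weight H i (Suc n) = real n / (H + real (Suc n)) * lr_weight H i n"
    using step one_minus_ql_alpha[OF assms(1), of n] by simp
  then have e: "lr_weight H i (Suc n) * (H + real (Suc n)) = lr_weight H i n * real n"
    using assms(1) by (simp add: field_simps del: lr_weight.simps)
  have "lr_weight H i n * real n / H = lr_weight H i (Suc n) + lr_weight H i (Suc n) * real (Suc n) / H"
    using assms(1) e by (simp add: field_simps del: lr_weight.simps)
  then show ?case using step by (simp add: atLeastAtMostSuc_conv del: lr_weight.simps)
qed

lemma sum_lr_weight_tail_le: "H > 0 \<Longrightarrow> 1 \<le> i \<Longrightarrow> (\<Sum>m\<in>{i..<N}. lr_weight H i m) \<le> 1 + 1/H"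
proof (cases "i < N")
  case True
  assume H: "H > 0" and i: "1 \<le> i"
  have "{i..<N} = {i..N-1}" using True by auto
  then show ?thesis
    using sum_lr_weight_tail[OF H i, of "N-1"] True lr_weight_nonneg[OF H, of i "N-1"] H by simp
qed simp

lemma sum_lr_weight_squared_le:
  assumes H: "H > 0" and m: "1 \<le> m"
  shows "(\<Sum>i<m. (lr_weight H (Suc i) m)\<^sup>2) \<le> (H + 1) / (H + real m)"
proof -
  have "(\<Sum>i<m. (lr_weight H (Suc i) m)\<^sup>2) \<le> (\<Sum>i<m. (H + 1) / (H + real m) * lr_weight H (Suc i) m)"
  proof (rule sum_mono)
    fix i
    have "lr_weight H (Suc i) m * lr_weight H (Suc i) m \<le> (H + 1) / (H + real m) * lr_weight H (Suc i) m"
      by (rule mult_right_mono) (use lr_weight_le[OF H] lr_weight_nonneg[OF H] in auto)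
    then show "(lr_weight H (Suc i) m)\<^sup>2 \<le> (H + 1) / (H + real m) * lr_weight H (Suc i) m"
      by (simp add: power2_eq_square)
  qed
  also have "\<dots> = (H + 1) / (H + real m) * (\<Sum>i<m. lr_weight H (Suc i) m)"
    by (rule sum_distrib_left[symmetric])
  also have "\<dots> = (H + 1) / (H + real m)" using sum_lr_weight[OF H m] by simp
  finally show ?thesis .
qed

lemma sum_lr_weight_squared_prefix_le:
  "(\<Sum>j<N. (lr_weight H (Suc j) \<tau>)\<^sup>2) \<le> (\<Sum>j<\<tau>. (lr_weight H (Suc j) \<tau>)\<^sup>2)"
proof (cases "N \<le> \<tau>")
  case True
  then show ?thesis by (intro sum_mono2) auto
next
  case False
  then have "(\<Sum>j<N. (lr_weight H (Suc j) \<tau>)\<^sup>2)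
      = (\<Sum>j<\<tau>. (lr_weight H (Suc j) \<tau>)\<^sup>2) + (\<Sum>j\<in>{\<tau>..<N}. (lr_weight H (Suc j) \<tau>)\<^sup>2)"
    by (metis atLeast0LessThan le0 nat_le_linear sum.atLeastLessThan_concat)
  also have "(\<Sum>j\<in>{\<tau>..<N}. (lr_weight H (Suc j) \<tau>)\<^sup>2) = 0"
    by (rule sum.neutral) (auto simp: lr_weight_eq_0)
  finally show ?thesis by simp
qed

section \<open>The algorithm as a deterministic transition\<close>

definition hist_of :: "qstate \<Rightarrow> (nat \<times> nat) list" where "hist_of st = fst st"
definition cur_of :: "qstate \<Rightarrow> nat" where "cur_of st = fst (snd st)"
definition n_of :: "qstate \<Rightarrow> nat \<Rightarrow> nat \<Rightarrow> nat" where "n_of st = fst (snd (snd st))"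
definition Q_of :: "qstate \<Rightarrow> nat \<Rightarrow> nat \<Rightarrow> real" where "Q_of st = fst (snd (snd (snd st)))"
definition Qhat_of :: "qstate \<Rightarrow> nat \<Rightarrow> nat \<Rightarrow> real" where "Qhat_of st = fst (snd (snd (snd (snd st))))"
definition Vhat_of :: "qstate \<Rightarrow> nat \<Rightarrow> real" where "Vhat_of st = snd (snd (snd (snd (snd st))))"

definition ql_action :: "((nat \<times> nat) list \<Rightarrow> nat \<Rightarrow> (nat \<Rightarrow> real) \<Rightarrow> nat) \<Rightarrow> qstate \<Rightarrow> nat" where
  "ql_action sel st = sel (hist_of st) (cur_of st) (Qhat_of st (cur_of st))"

definition ql_transition :: "nat \<Rightarrow> (nat \<Rightarrow> nat \<Rightarrow> real) \<Rightarrow> real \<Rightarrow> nat \<Rightarrow> real \<Rightarrow> real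
    \<Rightarrow> ((nat \<times> nat) list \<Rightarrow> nat \<Rightarrow> (nat \<Rightarrow> real) \<Rightarrow> nat) \<Rightarrow> qstate \<Rightarrow> nat \<Rightarrow> qstate" where
  "ql_transition nA r sp T \<delta> H sel st s' =
     (case st of (h, s, n, Q, Qhat, V) \<Rightarrow>
       let a = sel h s (\<lambda>b. Qhat s b);
           \<gamma> = 1 - 1 / H;
           \<tau> = n s a + 1;
           q' = (1 - ql_alpha H \<tau>) * Q s a
                     + ql_alpha H \<tau> * (r s a + \<gamma> * V s' + ql_bonus sp T \<delta> H \<tau>);
           n' = n(s := (n s)(a := \<tau>));
           Q' = Q(s := (Q s)(a := q'));
           Qh' = Qhat(s := (Qhat s)(a := min (Qhat s a) q'));
           V' = V(s := Max ((\<lambda>b. Qh' s b) ` {..<nA}))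
       in (h @ [(s, a)], s', n', Q', Qh', V'))"

lemma ql_step_eq_map_transition:
  "ql_step nA r p sp T \<delta> H sel st
    = map_pmf (ql_transition nA r sp T \<delta> H sel st) (p (cur_of st) (ql_action sel st))"
  by (cases st) (simp add: ql_step_def ql_transition_def[abs_def] ql_action_def Let_def
      cur_of_def hist_of_def Qhat_of_def)

definition ql_new_value :: "(nat \<Rightarrow> nat \<Rightarrow> real) \<Rightarrow> real \<Rightarrow> nat \<Rightarrow> real \<Rightarrow> real
    \<Rightarrow> ((nat \<times> nat) list \<Rightarrow> nat \<Rightarrow> (nat \<Rightarrow> real) \<Rightarrow> nat) \<Rightarrow> qstate \<Rightarrow> nat \<Rightarrow> real" where
  "ql_new_value r sp T \<delta> H sel st s' =
    (let s = cur_of st; a = ql_action sel st; \<tau> = n_of st s a + 1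
     in (1 - ql_alpha H \<tau>) * Q_of st s a
        + ql_alpha H \<tau> * (r s a + (1 - 1/H) * Vhat_of st s' + ql_bonus sp T \<delta> H \<tau>))"

lemma ql_transition_simps:
  fixes nA T :: nat and r :: "nat \<Rightarrow> nat \<Rightarrow> real" and sp \<delta> H :: real
    and sel :: "(nat \<times> nat) list \<Rightarrow> nat \<Rightarrow> (nat \<Rightarrow> real) \<Rightarrow> nat" and st s'
  defines "st' \<equiv> ql_transition nA r sp T \<delta> H sel st s'" and "s \<equiv> cur_of st" and "a \<equiv> ql_action sel st"
  shows "hist_of st' = hist_of st @ [(s, a)]"
    and "cur_of st' = s'"
    and "n_of st' = (n_of st)(s := (n_of st s)(a := n_of st s a + 1))"
    and "Q_of st' = (Q_of st)(s := (Q_of st s)(a := ql_new_value r sp T \<delta> H sel st s'))"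
    and "Qhat_of st'
      = (Qhat_of st)(s := (Qhat_of st s)(a := min (Qhat_of st s a) (ql_new_value r sp T \<delta> H sel st s')))"
    and "Vhat_of st' = (Vhat_of st)(s := Max ((\<lambda>b. Qhat_of st' s b) ` {..<nA}))"
  unfolding st'_def s_def a_def
  by (cases st; simp add: ql_transition_def ql_action_def Let_def hist_of_def cur_of_def n_of_def
      Q_of_def Qhat_of_def Vhat_of_def ql_new_value_def)+

section \<open>The discounted comparison problem\<close>

locale optimistic_ql =
  fixes nS nA :: nat and r :: "nat \<Rightarrow> nat \<Rightarrow> real" and p :: "nat \<Rightarrow> nat \<Rightarrow> nat pmf"
    and J :: real and q :: "nat \<Rightarrow> nat \<Rightarrow> real" and s1 T :: nat and \<delta> H :: real
    and sel :: "(nat \<times> nat) list \<Rightarrow> nat \<Rightarrow> (nat \<Rightarrow> real) \<Rightarrow> nat"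
  assumes mdp: "mdp_wf nS nA r p" and bellman_sol: "bellman nS nA r p J q" and s1_lt: "s1 < nS"
    and T_ge_1: "1 \<le> T" and delta_pos: "0 < \<delta>" and delta_lt_1: "\<delta> < 1"
    and sel_greedy: "\<forall>h s f. sel h s f < nA \<and> (\<forall>b<nA. f b \<le> f (sel h s f))"
    and H_ge_2: "2 \<le> H" and sp_pos: "0 < span nS (vfun nA q)"
begin

abbreviation sp :: real where "sp \<equiv> span nS (vfun nA q)"
abbreviation v :: "nat \<Rightarrow> real" where "v \<equiv> vfun nA q"
definition vmax :: real where "vmax = Max (v ` {..<nS})"
definition vmin :: real where "vmin = Min (v ` {..<nS})"
definition discount :: real where "discount = 1 - 1/H"
definition bonus :: "nat \<Rightarrow> real" where "bonus \<tau> = ql_bonus sp T \<delta> H \<tau>"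

text \<open>The comparison value function: by \<open>Vref_le_Qref_greedy\<close> it is a sub-solution of the
  Bellman equation discounted by \<^term>\<open>discount\<close>, and \<open>J - Vref s / H \<le> sp / H\<close>.\<close>

definition Vref :: "nat \<Rightarrow> real" where "Vref s = v s - vmax + H * J"
definition Pv :: "nat \<Rightarrow> nat \<Rightarrow> real" where "Pv s a = measure_pmf.expectation (p s a) v"
definition PVref :: "nat \<Rightarrow> nat \<Rightarrow> real" where "PVref s a = measure_pmf.expectation (p s a) Vref"
definition Qref :: "nat \<Rightarrow> nat \<Rightarrow> real" where "Qref s a = r s a + discount * PVref s a"

lemma nS_pos: "0 < nS" and nA_pos: "0 < nA"
  using mdp by (auto simp: mdp_wf_def)

lemma reward_bounds: "s < nS \<Longrightarrow> a < nA \<Longrightarrow> 0 \<le> r s a \<and> r s a \<le> 1"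
  using mdp by (auto simp: mdp_wf_def)

lemma p_support_subset: "s < nS \<Longrightarrow> a < nA \<Longrightarrow> set_pmf (p s a) \<subseteq> {..<nS}"
  using mdp by (auto simp: mdp_wf_def)

lemma finite_p_support: "s < nS \<Longrightarrow> a < nA \<Longrightarrow> finite (set_pmf (p s a))"
  using p_support_subset finite_subset by blast

lemma p_support_lt: "s < nS \<Longrightarrow> a < nA \<Longrightarrow> x \<in> set_pmf (p s a) \<Longrightarrow> x < nS"
  using p_support_subset by blast

lemma H_pos: "H > 0" using H_ge_2 by simp

lemma ql_action_lt: "ql_action sel st < nA"
  using sel_greedy unfolding ql_action_def by auto

lemma discount_bounds: "0 \<le> discount" "discount \<le> 1" using H_ge_2 unfolding discount_def by auto

lemma ln_2T_pos: "0 < ln (2 * real T / \<delta>)"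
proof -
  have "1 < 2 * real T / \<delta>" using T_ge_1 delta_pos delta_lt_1 by (simp add: field_simps)
  then show ?thesis by simp
qed

lemma v_le_vmax: "s < nS \<Longrightarrow> v s \<le> vmax"
  unfolding vmax_def by (rule Max_ge) auto

lemma vmin_le_v: "s < nS \<Longrightarrow> vmin \<le> v s"
  unfolding vmin_def by (rule Min_le) auto

lemma span_eq: "sp = vmax - vmin"
  unfolding span_def vmax_def vmin_def ..

lemma v_attained: "\<exists>a<nA. q s a = v s"
proof -
  have "Max ((\<lambda>a. q s a) ` {..<nA}) \<in> (\<lambda>a. q s a) ` {..<nA}"
    by (rule Max_in) (use nA_pos in auto)
  then show ?thesis unfolding vfun_def by auto
qed

lemma bellman_eq: "s < nS \<Longrightarrow> a < nA \<Longrightarrow> J + q s a = r s a + Pv s a"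
  using bellman_sol unfolding bellman_def Pv_def by auto

lemma Pv_bounds: "s < nS \<Longrightarrow> a < nA \<Longrightarrow> vmin \<le> Pv s a \<and> Pv s a \<le> vmax"
  unfolding Pv_def using finite_p_support p_support_lt v_le_vmax vmin_le_v
  by (auto intro!: expectation_pmf_le_const expectation_pmf_ge_const)

lemma J_bounds: "0 \<le> J \<and> J \<le> 1"
proof -
  obtain smax where smax: "smax < nS" "v smax = vmax"
  proof -
    have "vmax \<in> v ` {..<nS}" unfolding vmax_def by (rule Max_in) (use nS_pos in auto)
    then show ?thesis using that by auto
  qed
  obtain smin where smin: "smin < nS" "v smin = vmin"
  proof -
    have "vmin \<in> v ` {..<nS}" unfolding vmin_def by (rule Min_in) (use nS_pos in auto)
    then show ?thesis using that by auto
  qed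
  obtain a1 where a1: "a1 < nA" "q smax a1 = v smax" using v_attained by blast
  obtain a2 where a2: "a2 < nA" "q smin a2 = v smin" using v_attained by blast
  have "J + vmax = r smax a1 + Pv smax a1" using bellman_eq[OF smax(1) a1(1)] a1 smax by simp
  then have "J \<le> 1" using Pv_bounds[OF smax(1) a1(1)] reward_bounds[OF smax(1) a1(1)] by linarith
  moreover have "J + vmin = r smin a2 + Pv smin a2" using bellman_eq[OF smin(1) a2(1)] a2 smin by simp
  then have "0 \<le> J" using Pv_bounds[OF smin(1) a2(1)] reward_bounds[OF smin(1) a2(1)] by linarith
  ultimately show ?thesis by simp
qed

lemma Vref_bounds: "s < nS \<Longrightarrow> H * J - sp \<le> Vref s \<and> Vref s \<le> H * J"
  unfolding Vref_def span_eq using v_le_vmax vmin_le_v by auto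

lemma PVref_eq: "s < nS \<Longrightarrow> a < nA \<Longrightarrow> PVref s a = Pv s a - vmax + H * J"
  unfolding PVref_def Pv_def Vref_def
  using expectation_pmf_add_const[OF finite_p_support, of s a v "- vmax + H * J"]
  by (simp add: algebra_simps)

lemma Qref_le_H: "s < nS \<Longrightarrow> a < nA \<Longrightarrow> Qref s a \<le> H"
proof -
  assume sa: "s < nS" "a < nA"
  have "PVref s a \<le> H * J" using PVref_eq[OF sa] Pv_bounds[OF sa] by simp
  then have "discount * PVref s a \<le> discount * (H * J)" using discount_bounds by (simp add: mult_left_mono)
  also have "\<dots> = (H - 1) * J" unfolding discount_def using H_pos by (simp add: field_simps)
  also have "\<dots> \<le> H - 1" using J_bounds H_ge_2 by (simp add: mult_left_le)
  finally show ?thesis unfolding Qref_def using reward_bounds[OF sa] by simp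
qed

lemma Qref_ge: "s < nS \<Longrightarrow> a < nA \<Longrightarrow> - sp \<le> Qref s a"
proof -
  assume sa: "s < nS" "a < nA"
  have "0 \<le> H * J" using J_bounds H_pos by simp
  then have "- sp \<le> PVref s a" using PVref_eq[OF sa] Pv_bounds[OF sa] span_eq by linarith
  then have "discount * (- sp) \<le> discount * PVref s a" using discount_bounds by (intro mult_left_mono) auto
  moreover have "- sp \<le> discount * (- sp)" using discount_bounds sp_pos by (simp add: mult_left_le)
  ultimately show ?thesis unfolding Qref_def using reward_bounds[OF sa] by linarith
qed

lemma Vref_le_Qref_greedy: "s < nS \<Longrightarrow> a < nA \<Longrightarrow> q s a = v s \<Longrightarrow> Vref s \<le> Qref s a"
proof -
  assume sa: "s < nS" "a < nA" and qa: "q s a = v s"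
  have b: "r s a = J + v s - Pv s a" using bellman_eq[OF sa] qa by simp
  have "Qref s a = J + v s - Pv s a + (1 - 1/H) * (Pv s a - vmax + H * J)"
    unfolding Qref_def discount_def PVref_eq[OF sa] b ..
  also have "\<dots> = Vref s + (vmax - Pv s a) / H"
    unfolding Vref_def using H_pos by (simp add: field_simps)
  finally show ?thesis using Pv_bounds[OF sa] H_pos by simp
qed

lemma bonus_nonneg: "0 \<le> bonus k"
  unfolding bonus_def ql_bonus_def using sp_pos H_pos ln_2T_pos by simp

lemma bonus_antimono: "1 \<le> j \<Longrightarrow> j \<le> k \<Longrightarrow> bonus k \<le> bonus j"
proof -
  assume jk: "1 \<le> j" "j \<le> k"
  have "H / real k \<le> H / real j" using jk H_pos by (simp add: frac_le)
  then have "H / real k * ln (2 * real T / \<delta>) \<le> H / real j * ln (2 * real T / \<delta>)"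
    using ln_2T_pos by (intro mult_right_mono) auto
  then have "sqrt (H / real k * ln (2 * real T / \<delta>)) \<le> sqrt (H / real j * ln (2 * real T / \<delta>))"
    by (rule real_sqrt_le_mono)
  then show ?thesis unfolding bonus_def ql_bonus_def by (rule mult_left_mono) (use sp_pos in auto)
qed

lemma Vref_ge: "s < nS \<Longrightarrow> - sp \<le> Vref s"
  using Vref_bounds[of s] J_bounds H_pos by (smt (verit) mult_nonneg_nonneg)

lemma J_minus_Vref_le: "s < nS \<Longrightarrow> J - Vref s / H \<le> sp / H"
proof -
  assume "s < nS"
  have "J - Vref s / H = (vmax - v s) / H" unfolding Vref_def using H_pos by (simp add: field_simps)
  also have "\<dots> \<le> sp / H" using vmin_le_v[OF \<open>s < nS\<close>] span_eq H_pos by (simp add: divide_right_mono)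
  finally show ?thesis .
qed

lemma discount_mult_le: "x \<le> c \<Longrightarrow> 0 \<le> c \<Longrightarrow> discount * x \<le> c"
  using discount_bounds by (smt (verit) mult_left_le_one_le mult_nonneg_nonpos)

lemma discount_one_plus_inv_H_le: "0 \<le> discount * (1 + 1/H)" "discount * (1 + 1/H) \<le> 1"
proof -
  have "discount * (1 + 1/H) = 1 - 1 / H\<^sup>2"
    unfolding discount_def using H_pos by (simp add: field_simps power2_eq_square)
  moreover have "1 * 1 \<le> H * H" by (rule mult_mono) (use H_ge_2 in auto)
  ultimately show "0 \<le> discount * (1 + 1/H)" "discount * (1 + 1/H) \<le> 1"
    using H_pos by (auto simp: power2_eq_square)
qed

lemma abs_discount_mult_le: "\<bar>discount * x\<bar> \<le> \<bar>x\<bar>"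
  using discount_bounds by (simp add: abs_mult mult_left_le_one_le)

lemma bonus_Suc: "bonus (Suc j) = 4 * sp * sqrt (H * ln (2 * real T / \<delta>)) * (1 / sqrt (real (Suc j)))"
proof -
  have "H / real (Suc j) * ln (2 * real T / \<delta>) = (H * ln (2 * real T / \<delta>)) / real (Suc j)" by simp
  then show ?thesis unfolding bonus_def ql_bonus_def by (simp add: real_sqrt_divide)
qed

lemma bonus_scale_nonneg: "0 \<le> sp * sqrt (H * ln (2 * real T / \<delta>))" using sp_pos H_pos ln_2T_pos by simp

lemma sum_bonus_Suc_le: "(\<Sum>j<N. bonus (Suc j)) \<le> 8 * sp * sqrt (H * ln (2 * real T / \<delta>)) * sqrt (real N)"
proof -
  have "(\<Sum>j<N. bonus (Suc j)) = 4 * sp * sqrt (H * ln (2 * real T / \<delta>)) * (\<Sum>j<N. 1 / sqrt (real (Suc j)))"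
    unfolding bonus_Suc by (simp add: sum_distrib_left)
  also have "\<dots> \<le> 4 * sp * sqrt (H * ln (2 * real T / \<delta>)) * (2 * sqrt (real N))"
    by (rule mult_left_mono[OF sum_inverse_sqrt_le]) (use bonus_scale_nonneg in simp)
  finally show ?thesis by simp
qed

fun ql_path :: "(nat \<Rightarrow> nat) \<Rightarrow> nat \<Rightarrow> qstate" where
  "ql_path xs 0 = ql_init H (xs 0)"
| "ql_path xs (Suc t) = ql_transition nA r sp T \<delta> H sel (ql_path xs t) (xs (Suc t))"

lemma ql_path_cong: "(\<And>i. i \<le> k \<Longrightarrow> xs i = ys i) \<Longrightarrow> ql_path xs k = ql_path ys k"
  by (induction k) auto

end

section \<open>Learning-rate averages along a trajectory\<close>

text \<open>Every state in the support of \<^const>\<open>ql_run\<close> is \<^term>\<open>ql_path xs t\<close> for a sequence \<open>xs\<close>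
  of states (\<open>ql_run_reachable\<close>), so the analysis of the algorithm is carried out pathwise.\<close>

locale ql_trajectory = optimistic_ql +
  fixes xs :: "nat \<Rightarrow> nat"
  assumes xs_rng: "\<And>t. xs t < nS"
begin

definition state_at :: "nat \<Rightarrow> qstate" where "state_at t = ql_path xs t"
definition act :: "nat \<Rightarrow> nat" where "act t = ql_action sel (state_at t)"
definition sa :: "nat \<Rightarrow> nat \<times> nat" where "sa t = (xs t, act t)"
definition counts :: "nat \<Rightarrow> nat \<Rightarrow> nat \<Rightarrow> nat" where "counts t = n_of (state_at t)"
definition Qt :: "nat \<Rightarrow> nat \<Rightarrow> nat \<Rightarrow> real" where "Qt t = Q_of (state_at t)"
definition Qhat :: "nat \<Rightarrow> nat \<Rightarrow> nat \<Rightarrow> real" where "Qhat t = Qhat_of (state_at t)"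
definition Vhat :: "nat \<Rightarrow> nat \<Rightarrow> real" where "Vhat t = Vhat_of (state_at t)"

fun visits :: "nat \<Rightarrow> nat \<times> nat \<Rightarrow> nat" where
  "visits 0 pp = 0"
| "visits (Suc t) pp = visits t pp + (if sa t = pp then 1 else 0)"

definition tau :: "nat \<Rightarrow> nat" where "tau t = visits t (sa t) + 1"
definition target :: "nat \<Rightarrow> real" where
  "target t = r (xs t) (act t) + discount * Vhat t (xs (Suc t)) + bonus (tau t)"

lemma cur_state_at: "cur_of (state_at t) = xs t"
proof (cases t)
  case 0 then show ?thesis by (simp add: state_at_def ql_init_def cur_of_def)
next
  case (Suc t') then show ?thesis by (simp add: state_at_def ql_transition_simps)
qed

lemma state_at_Suc: "state_at (Suc t) = ql_transition nA r sp T \<delta> H sel (state_at t) (xs (Suc t))"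
  by (simp add: state_at_def)

lemma hist_state_at: "hist_of (state_at t) = map sa [0..<t]"
proof (induction t)
  case 0 then show ?case by (simp add: state_at_def ql_init_def hist_of_def)
next
  case (Suc t) then show ?case
    by (simp add: state_at_Suc ql_transition_simps cur_state_at sa_def act_def)
qed

lemma act_lt: "act t < nA"
  unfolding act_def by (rule ql_action_lt)

lemma act_greedy: "b < nA \<Longrightarrow> Qhat t (xs t) b \<le> Qhat t (xs t) (act t)"
  using sel_greedy unfolding act_def ql_action_def Qhat_def cur_state_at by auto

lemma sa_range: "sa t \<in> {..<nS} \<times> {..<nA}"
  using xs_rng act_lt unfolding sa_def by auto

lemma initial_values: "counts 0 s a = 0" "Qt 0 s a = H" "Qhat 0 s a = H" "Vhat 0 s = H"
  by (simp_all add: counts_def Qt_def Qhat_def Vhat_def state_at_def ql_init_def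
      n_of_def Q_of_def Qhat_of_def Vhat_of_def)

lemma counts_Suc: "counts (Suc t) s a = (if (s, a) = sa t then counts t s a + 1 else counts t s a)"
  by (simp add: counts_def state_at_Suc ql_transition_simps cur_state_at sa_def act_def)

lemma counts_eq_visits: "counts t s a = visits t (s, a)"
  by (induction t) (auto simp: initial_values counts_Suc)

lemma Qt_Suc:
  "Qt (Suc t) s a = (if (s, a) = sa t
     then (1 - ql_alpha H (tau t)) * Qt t s a + ql_alpha H (tau t) * target t else Qt t s a)"
  by (auto simp add: Qt_def state_at_Suc ql_transition_simps cur_state_at sa_def act_def[symmetric]
      ql_new_value_def Let_def tau_def target_def counts_eq_visits[unfolded counts_def, symmetric]
      discount_def bonus_def Vhat_def)

lemma Qhat_Suc:
  "Qhat (Suc t) s a = (if (s, a) = sa t then min (Qhat t s a) (Qt (Suc t) s a) else Qhat t s a)"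
  by (auto simp add: Qhat_def Qt_def state_at_Suc ql_transition_simps cur_state_at sa_def
      act_def[symmetric])

lemma Vhat_Suc: "Vhat (Suc t) s = (if s = xs t then Max ((\<lambda>b. Qhat (Suc t) s b) ` {..<nA}) else Vhat t s)"
  by (auto simp add: Vhat_def Qhat_def state_at_Suc ql_transition_simps cur_state_at)

lemma Qhat_Suc_other: "s \<noteq> xs t \<Longrightarrow> Qhat (Suc t) s a = Qhat t s a"
  by (simp add: Qhat_Suc sa_def)

lemma Vhat_eq_Max: "Vhat t s = Max ((\<lambda>b. Qhat t s b) ` {..<nA})"
proof (induction t)
  case 0
  have "(\<lambda>b. Qhat 0 s b) ` {..<nA} = {H}" using nA_pos by (auto simp: initial_values)
  then show ?case by (simp add: initial_values)
next
  case (Suc t)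
  show ?case
  proof (cases "s = xs t")
    case True then show ?thesis by (simp add: Vhat_Suc)
  next
    case False then show ?thesis using Suc by (simp add: Vhat_Suc Qhat_Suc_other)
  qed
qed

lemma Qhat_le_Qt: "Qhat t s a \<le> Qt t s a"
  by (induction t) (auto simp: initial_values Qhat_Suc Qt_Suc)

lemma Qhat_Suc_le: "Qhat (Suc t) s a \<le> Qhat t s a"
  by (auto simp: Qhat_Suc)

lemma Qhat_le_H: "Qhat t s a \<le> H"
proof (induction t)
  case 0 then show ?case by (simp add: initial_values)
next
  case (Suc t) then show ?case using Qhat_Suc_le[of t s a] by linarith
qed

lemma Qhat_le_Vhat: "a < nA \<Longrightarrow> Qhat t s a \<le> Vhat t s"
  unfolding Vhat_eq_Max by (rule Max_ge) auto

lemma Vhat_Suc_le: "Vhat (Suc t) s \<le> Vhat t s"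
  unfolding Vhat_eq_Max
proof (rule Max.boundedI)
  fix x assume "x \<in> (\<lambda>b. Qhat (Suc t) s b) ` {..<nA}"
  then obtain b where b: "b < nA" "x = Qhat (Suc t) s b" by auto
  have "Qhat (Suc t) s b \<le> Qhat t s b" by (rule Qhat_Suc_le)
  also have "\<dots> \<le> Max ((\<lambda>b. Qhat t s b) ` {..<nA})" by (rule Max_ge) (use b in auto)
  finally show "x \<le> Max ((\<lambda>b. Qhat t s b) ` {..<nA})" using b by simp
qed (use nA_pos in auto)

lemma Vhat_le_H: "Vhat t s \<le> H"
  unfolding Vhat_eq_Max by (rule Max.boundedI) (use nA_pos Qhat_le_H in auto)

lemma Vhat_greedy: "Vhat t (xs t) = Qhat t (xs t) (act t)"
proof (rule antisym)
  show "Vhat t (xs t) \<le> Qhat t (xs t) (act t)"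
    unfolding Vhat_eq_Max by (rule Max.boundedI) (use nA_pos act_greedy in auto)
  show "Qhat t (xs t) (act t) \<le> Vhat t (xs t)" by (rule Qhat_le_Vhat[OF act_lt])
qed

lemma visits_mono: "i \<le> t \<Longrightarrow> visits i pp \<le> visits t pp"
proof (induction t rule: dec_induct)
  case (step t) then show ?case by simp
qed simp

lemma visits_less: "i < t \<Longrightarrow> sa i = pp \<Longrightarrow> visits i pp < visits t pp"
  using visits_mono[of "Suc i" t pp] by simp

lemma visits_le: "visits t pp \<le> t"
  by (induction t) auto

lemma sum_visits_reindex:
  assumes "a \<le> b"
  shows "(\<Sum>i\<in>{a..<b}. if sa i = pp then g (visits i pp) else 0) = (\<Sum>j\<in>{visits a pp..<visits b pp}. g j)"
  using assms
proof (induction b rule: dec_induct)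
  case base then show ?case by simp
next
  case (step b)
  have m: "visits a pp \<le> visits b pp" using visits_mono[OF step(1)] .
  show ?case
  proof (cases "sa b = pp")
    case True
    have "(\<Sum>i\<in>{a..<Suc b}. if sa i = pp then g (visits i pp) else 0)
        = (\<Sum>i\<in>{a..<b}. if sa i = pp then g (visits i pp) else 0) + g (visits b pp)"
      using step(1) True by simp
    also have "\<dots> = (\<Sum>j\<in>{visits a pp..<visits b pp}. g j) + g (visits b pp)" using step by simp
    also have "\<dots> = (\<Sum>j\<in>{visits a pp..<Suc (visits b pp)}. g j)" using m by simp
    finally show ?thesis using True by simp
  next
    case False
    then show ?thesis using step by simp
  qed
qed

lemma sum_lessThan_visits_reindex:
  "(\<Sum>i<b. if sa i = pp then g (visits i pp) else 0) = (\<Sum>j<visits b pp. g j)"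
  using sum_visits_reindex[of 0 b pp g] by (simp add: atLeast0LessThan)

definition wsum :: "nat \<Rightarrow> nat \<times> nat \<Rightarrow> nat \<Rightarrow> (nat \<Rightarrow> real) \<Rightarrow> real" where
  "wsum t pp \<tau> z = (\<Sum>i<t. if sa i = pp then lr_weight H (visits i pp + 1) \<tau> * z i else 0)"

lemma wsum_one: "wsum t pp \<tau> (\<lambda>_. 1) = (\<Sum>j<visits t pp. lr_weight H (Suc j) \<tau>)"
proof -
  have "wsum t pp \<tau> (\<lambda>_. 1) = (\<Sum>i<t. if sa i = pp then lr_weight H (Suc (visits i pp)) \<tau> else 0)"
    unfolding wsum_def by (intro sum.cong) auto
  then show ?thesis
    using sum_lessThan_visits_reindex[where b=t and pp=pp and g="\<lambda>j. lr_weight H (Suc j) \<tau>"] by metis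
qed

lemma wsum_one_eq_1: "visits t pp = \<tau> \<Longrightarrow> 1 \<le> \<tau> \<Longrightarrow> wsum t pp \<tau> (\<lambda>_. 1) = 1"
  unfolding wsum_one using sum_lr_weight[OF H_pos] by simp

lemma wsum_stable:
  assumes "\<tau> \<le> visits t pp" "t \<le> t'"
  shows "wsum t' pp \<tau> z = wsum t pp \<tau> z"
proof -
  have "wsum t' pp \<tau> z
      = wsum t pp \<tau> z + (\<Sum>i\<in>{t..<t'}. if sa i = pp then lr_weight H (visits i pp + 1) \<tau> * z i else 0)"
    unfolding wsum_def using assms(2)
    by (metis (no_types, lifting) atLeast0LessThan le0 sum.atLeastLessThan_concat)
  also have "(\<Sum>i\<in>{t..<t'}. if sa i = pp then lr_weight H (visits i pp + 1) \<tau> * z i else 0) = 0"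
  proof (rule sum.neutral, intro ballI)
    fix i assume "i \<in> {t..<t'}"
    then have "visits t pp \<le> visits i pp" using visits_mono by auto
    then have "lr_weight H (visits i pp + 1) \<tau> = 0" using assms(1) by (intro lr_weight_eq_0) simp
    then show "(if sa i = pp then lr_weight H (visits i pp + 1) \<tau> * z i else 0) = 0" by simp
  qed
  finally show ?thesis by simp
qed

lemma wsum_0: "wsum t pp 0 z = 0"
  unfolding wsum_def by (intro sum.neutral) auto

lemma wsum_Suc_visit:
  assumes "sa t = pp"
  shows "wsum (Suc t) pp (Suc (visits t pp)) z
    = (1 - ql_alpha H (Suc (visits t pp))) * wsum t pp (visits t pp) z + ql_alpha H (Suc (visits t pp)) * z t"
proof -
  have "lr_weight H (visits i pp + 1) (Suc (visits t pp))
      = (1 - ql_alpha H (Suc (visits t pp))) * lr_weight H (visits i pp + 1) (visits t pp)"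
    if "i < t" "sa i = pp" for i
    using visits_less[OF that] by simp
  then show ?thesis
    using assms by (simp add: wsum_def sum_distrib_left mult.assoc cong: if_cong) (auto intro!: sum.cong)
qed

lemma Qt_eq_wsum:
  "Qt t (fst pp) (snd pp) = (if visits t pp = 0 then H else wsum t pp (visits t pp) target)"
proof (induction t)
  case 0 then show ?case by (simp add: initial_values)
next
  case (Suc t)
  show ?case
  proof (cases "sa t = pp")
    case False
    then show ?thesis using Suc by (simp add: Qt_Suc wsum_def)
  next
    case True
    have "1 - ql_alpha H (Suc 0) = 0" using H_pos by (simp add: ql_alpha_def)
    then show ?thesis
      using Suc True wsum_Suc_visit[OF True, of target]
      by (auto simp: Qt_Suc tau_def wsum_0)
  qed
qed

section \<open>Optimism\<close>

definition noise :: "nat \<Rightarrow> real" where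
  "noise t = Vref (xs (Suc t)) - PVref (xs t) (act t)"

definition Vhat_gap :: "nat \<Rightarrow> real" where
  "Vhat_gap t = Vhat t (xs (Suc t)) - Vref (xs (Suc t))"

definition concentrated :: bool where
  "concentrated \<longleftrightarrow>
     (\<forall>s<nS. \<forall>a<nA. \<forall>\<tau>. 1 \<le> \<tau> \<longrightarrow> \<tau> \<le> T \<longrightarrow> \<bar>wsum T (s, a) \<tau> noise\<bar> \<le> bonus \<tau>)"

definition optimistic :: "nat \<Rightarrow> bool" where
  "optimistic t \<longleftrightarrow> (\<forall>s<nS. \<forall>a<nA. Qref s a \<le> Qhat t s a)"

lemma wsum_add: "wsum t pp \<tau> (\<lambda>i. f i + g i) = wsum t pp \<tau> f + wsum t pp \<tau> g"
  unfolding wsum_def sum.distrib[symmetric] by (rule sum.cong) (auto simp: distrib_left)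

lemma wsum_diff: "wsum t pp \<tau> (\<lambda>i. f i - g i) = wsum t pp \<tau> f - wsum t pp \<tau> g"
  unfolding wsum_def sum_subtractf[symmetric] by (rule sum.cong) (auto simp: right_diff_distrib)

lemma wsum_cmult: "wsum t pp \<tau> (\<lambda>i. c * f i) = c * wsum t pp \<tau> f"
  unfolding wsum_def by (simp add: sum_distrib_left) (rule sum.cong; simp)

lemma wsum_sa_const: "wsum t pp \<tau> (\<lambda>i. g (sa i)) = g pp * wsum t pp \<tau> (\<lambda>_. 1)"
  unfolding wsum_def by (simp add: sum_distrib_left) (rule sum.cong; auto)

lemma wsum_mono: "(\<And>i. i < t \<Longrightarrow> sa i = pp \<Longrightarrow> f i \<le> g i) \<Longrightarrow> wsum t pp \<tau> f \<le> wsum t pp \<tau> g"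
  unfolding wsum_def by (rule sum_mono) (auto intro!: mult_left_mono lr_weight_nonneg[OF H_pos])

lemma wsum_nonneg: "(\<And>i. i < t \<Longrightarrow> sa i = pp \<Longrightarrow> 0 \<le> f i) \<Longrightarrow> 0 \<le> wsum t pp \<tau> f"
  using wsum_mono[of t pp "\<lambda>_. 0" f \<tau>] by (simp add: wsum_def cong: if_cong)

lemma target_minus_Qref:
  "target t - Qref (xs t) (act t) = discount * Vhat_gap t + discount * noise t + bonus (tau t)"
  unfolding target_def Qref_def noise_def Vhat_gap_def by (simp add: algebra_simps)

lemma Qt_minus_Qref:
  assumes "visits t (s, a) = \<tau>" "1 \<le> \<tau>"
  shows "Qt t s a - Qref s a = discount * wsum t (s, a) \<tau> Vhat_gap + discount * wsum t (s, a) \<tau> noise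
    + wsum t (s, a) \<tau> (\<lambda>i. bonus (tau i))"
proof -
  have "Qt t s a = wsum t (s, a) \<tau> target" using Qt_eq_wsum[of t "(s, a)"] assms by simp
  moreover have "Qref s a = wsum t (s, a) \<tau> (\<lambda>i. Qref (xs i) (act i))"
    using wsum_sa_const[of t "(s, a)" \<tau> "\<lambda>x. Qref (fst x) (snd x)"] wsum_one_eq_1[OF assms]
    by (simp add: sa_def)
  ultimately have "Qt t s a - Qref s a = wsum t (s, a) \<tau> (\<lambda>i. target i - Qref (xs i) (act i))"
    by (simp add: wsum_diff)
  then show ?thesis by (simp add: target_minus_Qref wsum_add wsum_cmult)
qed

lemma bonus_le_wsum_bonus:
  assumes "visits t pp = \<tau>" "1 \<le> \<tau>"
  shows "bonus \<tau> \<le> wsum t pp \<tau> (\<lambda>i. bonus (tau i))"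
proof -
  have "wsum t pp \<tau> (\<lambda>_. bonus \<tau>) \<le> wsum t pp \<tau> (\<lambda>i. bonus (tau i))"
  proof (rule wsum_mono)
    fix i assume i: "i < t" "sa i = pp"
    have "tau i \<le> \<tau>" unfolding tau_def using visits_less[OF i] i assms by simp
    then show "bonus \<tau> \<le> bonus (tau i)" by (intro bonus_antimono) (auto simp: tau_def)
  qed
  moreover have "wsum t pp \<tau> (\<lambda>_. bonus \<tau>) = bonus \<tau>"
    using wsum_cmult[of t pp \<tau> "bonus \<tau>" "\<lambda>_. 1"] wsum_one_eq_1[OF assms] by simp
  ultimately show ?thesis by simp
qed

lemma Qt_minus_Qref_bounds:
  assumes conc: concentrated and "t \<le> T" "s < nS" "a < nA" and \<tau>: "visits t (s, a) = \<tau>" "1 \<le> \<tau>"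
  shows "discount * wsum t (s, a) \<tau> Vhat_gap + wsum t (s, a) \<tau> (\<lambda>i. bonus (tau i)) - bonus \<tau>
      \<le> Qt t s a - Qref s a"
    and "Qt t s a - Qref s a
      \<le> discount * wsum t (s, a) \<tau> Vhat_gap + wsum t (s, a) \<tau> (\<lambda>i. bonus (tau i)) + bonus \<tau>"
proof -
  have "\<tau> \<le> T" using visits_le[of t "(s, a)"] assms by simp
  moreover have "wsum T (s, a) \<tau> noise = wsum t (s, a) \<tau> noise"
    by (rule wsum_stable) (use assms in auto)
  ultimately have "\<bar>wsum t (s, a) \<tau> noise\<bar> \<le> bonus \<tau>"
    using conc assms unfolding concentrated_def by metis
  then have "\<bar>discount * wsum t (s, a) \<tau> noise\<bar> \<le> bonus \<tau>"
    using abs_discount_mult_le order_trans by blast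
  then show "discount * wsum t (s, a) \<tau> Vhat_gap + wsum t (s, a) \<tau> (\<lambda>i. bonus (tau i)) - bonus \<tau>
      \<le> Qt t s a - Qref s a"
    and "Qt t s a - Qref s a
      \<le> discount * wsum t (s, a) \<tau> Vhat_gap + wsum t (s, a) \<tau> (\<lambda>i. bonus (tau i)) + bonus \<tau>"
    unfolding Qt_minus_Qref[OF \<tau>] by (auto simp: abs_le_iff)
qed

lemma Vref_le_Vhat: "optimistic t \<Longrightarrow> s < nS \<Longrightarrow> Vref s \<le> Vhat t s"
proof -
  assume o: "optimistic t" and s: "s < nS"
  obtain b where b: "b < nA" "q s b = v s" using v_attained by blast
  have "Vref s \<le> Qref s b" by (rule Vref_le_Qref_greedy[OF s b])
  also have "\<dots> \<le> Qhat t s b" using o s b unfolding optimistic_def by auto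
  also have "\<dots> \<le> Vhat t s" by (rule Qhat_le_Vhat[OF b(1)])
  finally show ?thesis .
qed

lemma Vhat_gap_nonneg: "optimistic t \<Longrightarrow> 0 \<le> Vhat_gap t"
  unfolding Vhat_gap_def using Vref_le_Vhat xs_rng by simp

lemma optimistic_upto:
  assumes conc: concentrated
  shows "t \<le> T \<Longrightarrow> optimistic t"
proof (induction t rule: less_induct)
  case (less t)
  show ?case
  proof (cases t)
    case 0
    then show ?thesis unfolding optimistic_def using Qref_le_H by (simp add: initial_values)
  next
    case (Suc t0)
    have IH: "optimistic i" if "i \<le> t0" for i using less Suc that by simp
    show ?thesis unfolding optimistic_def
    proof (intro allI impI)
      fix s a assume sa: "s < nS" "a < nA"
      show "Qref s a \<le> Qhat t s a"
      proof (cases "(s, a) = sa t0")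
        case False
        then show ?thesis using IH[of t0] sa Suc by (simp add: Qhat_Suc optimistic_def)
      next
        case True
        define \<tau> where "\<tau> = visits t (s, a)"
        have \<tau>1: "1 \<le> \<tau>" unfolding \<tau>_def using True Suc by simp
        have "0 \<le> wsum t (s, a) \<tau> Vhat_gap"
          by (rule wsum_nonneg) (use IH Vhat_gap_nonneg Suc in force)
        then have "Qref s a \<le> Qt t s a"
          using Qt_minus_Qref_bounds(1)[OF conc less.prems sa \<tau>_def[symmetric] \<tau>1]
            bonus_le_wsum_bonus[OF \<tau>_def[symmetric] \<tau>1] discount_bounds
          by (smt (verit) mult_nonneg_nonneg)
        then show ?thesis using True IH[of t0] sa Suc by (simp add: Qhat_Suc optimistic_def)
      qed
    qed
  qed
qed

section \<open>Regret on the good event\<close>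

definition wsum_cur :: "nat \<Rightarrow> (nat \<Rightarrow> real) \<Rightarrow> real" where
  "wsum_cur t z = wsum t (sa t) (visits t (sa t)) z"

definition init_or_bonus :: "nat \<Rightarrow> real" where
  "init_or_bonus j = (if j = 0 then H + sp else bonus j)"

lemma Qhat_minus_Qref_le:
  assumes conc: concentrated and t: "t < T"
  shows "Qhat t (xs t) (act t) - Qref (xs t) (act t)
    \<le> init_or_bonus (visits t (sa t)) + discount * wsum_cur t Vhat_gap + wsum_cur t (\<lambda>i. bonus (tau i))"
proof -
  have "Qhat t (xs t) (act t) - Qref (xs t) (act t) \<le> Qt t (xs t) (act t) - Qref (xs t) (act t)"
    using Qhat_le_Qt by simp
  also have "\<dots> \<le> init_or_bonus (visits t (sa t)) + discount * wsum_cur t Vhat_gap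
      + wsum_cur t (\<lambda>i. bonus (tau i))"
  proof (cases "visits t (sa t) = 0")
    case True
    then show ?thesis using Qt_eq_wsum[of t "sa t"] Qref_ge[OF xs_rng act_lt, of t t]
      by (simp add: sa_def init_or_bonus_def wsum_cur_def wsum_0)
  next
    case False
    define \<tau> where "\<tau> = visits t (xs t, act t)"
    have "1 \<le> \<tau>" using False by (simp add: \<tau>_def sa_def)
    from Qt_minus_Qref_bounds(2)[OF conc less_imp_le[OF t] xs_rng act_lt \<tau>_def[symmetric] this]
    show ?thesis using False by (simp add: \<tau>_def sa_def init_or_bonus_def wsum_cur_def)
  qed
  finally show ?thesis .
qed

text \<open>Each sample enters the later estimates of its pair with total weight at most \<open>1 + 1/H\<close>
  (\<open>sum_lr_weight_tail_le\<close>).\<close>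

lemma sum_wsum_cur_le:
  assumes nonneg: "\<And>i. i < T \<Longrightarrow> 0 \<le> z i"
  shows "(\<Sum>t<T. wsum_cur t z) \<le> (1 + 1/H) * (\<Sum>i<T. z i)"
proof -
  define later where "later i = (\<Sum>t\<in>{Suc i..<T}.
    if sa t = sa i then lr_weight H (visits (Suc i) (sa i)) (visits t (sa i)) else 0)" for i
  have "(\<Sum>t<T. wsum_cur t z) = (\<Sum>t<T. \<Sum>i<t.
      if sa i = sa t then lr_weight H (visits i (sa t) + 1) (visits t (sa t)) * z i else 0)"
    unfolding wsum_cur_def wsum_def ..
  also have "\<dots> = (\<Sum>i<T. \<Sum>t\<in>{Suc i..<T}.
      if sa i = sa t then lr_weight H (visits i (sa t) + 1) (visits t (sa t)) * z i else 0)"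
    by (rule sum_lessThan_triangle_swap)
  also have "\<dots> = (\<Sum>i<T. z i * later i)"
    unfolding later_def by (rule sum.cong) (auto simp: sum_distrib_left intro!: sum.cong)
  also have "\<dots> \<le> (\<Sum>i<T. z i * (1 + 1/H))"
  proof (rule sum_mono)
    fix i assume i: "i \<in> {..<T}"
    have "later i = (\<Sum>j\<in>{visits (Suc i) (sa i)..<visits T (sa i)}. lr_weight H (visits (Suc i) (sa i)) j)"
      unfolding later_def by (rule sum_visits_reindex) (use i in auto)
    also have "\<dots> \<le> 1 + 1/H" by (rule sum_lr_weight_tail_le[OF H_pos]) simp
    finally show "z i * later i \<le> z i * (1 + 1/H)" by (rule mult_left_mono) (use nonneg i in auto)
  qed
  also have "\<dots> = (1 + 1/H) * (\<Sum>i<T. z i)" by (simp add: sum_distrib_right[symmetric] mult.commute)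
  finally show ?thesis .
qed

abbreviation pairs :: "(nat \<times> nat) set" where "pairs \<equiv> {..<nS} \<times> {..<nA}"

lemma sum_split_pairs: "(\<Sum>t<T'. f t) = (\<Sum>pp\<in>pairs. \<Sum>t<T'. if sa t = pp then f t else 0)"
proof -
  have "(\<Sum>pp\<in>pairs. \<Sum>t<T'. if sa t = pp then f t else 0)
      = (\<Sum>t<T'. \<Sum>pp\<in>pairs. if sa t = pp then f t else 0)"
    by (rule sum.swap)
  also have "\<dots> = (\<Sum>t<T'. f t)"
    by (rule sum.cong) (use sa_range in auto)
  finally show ?thesis by simp
qed

lemma sum_init_or_bonus_le: "(\<Sum>j<N. init_or_bonus j) \<le> H + sp + (\<Sum>j<N. bonus (Suc j))"
proof (cases N)
  case 0 then show ?thesis using H_pos sp_pos by simp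
next
  case (Suc N')
  have "(\<Sum>j<N'. bonus (Suc j)) \<le> (\<Sum>j<Suc N'. bonus (Suc j))" using bonus_nonneg by simp
  moreover have "(\<Sum>j<Suc N'. init_or_bonus j) = H + sp + (\<Sum>j<N'. bonus (Suc j))"
    by (induction N') (simp_all add: init_or_bonus_def)
  ultimately show ?thesis using Suc by simp
qed

definition bonus_total :: real where "bonus_total = (\<Sum>pp\<in>pairs. \<Sum>j<visits T pp. bonus (Suc j))"

lemma sum_visits: "(\<Sum>pp\<in>pairs. real (visits T' pp)) = real T'"
proof -
  have "real T' = (\<Sum>t<T'. (1::real))" by simp
  also have "\<dots> = (\<Sum>pp\<in>pairs. \<Sum>t<T'. if sa t = pp then 1 else 0)" by (rule sum_split_pairs)
  also have "\<dots> = (\<Sum>pp\<in>pairs. real (visits T' pp))"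
    using sum_lessThan_visits_reindex[where g="\<lambda>_. (1::real)"] by simp
  finally show ?thesis by simp
qed

lemma bonus_total_le:
  "bonus_total \<le> 8 * sp * sqrt (H * ln (2 * real T / \<delta>)) * sqrt (real (nS * nA) * real T)"
proof -
  have "(\<Sum>pp\<in>pairs. sqrt (real (visits T pp)))\<^sup>2
      \<le> (\<Sum>pp\<in>pairs. (sqrt (real (visits T pp)))\<^sup>2) * card pairs"
    by (rule sum_squared_le_sum_of_squares)
  also have "\<dots> = real (nS * nA) * real T" using sum_visits[of T] by (simp add: card_cartesian_product)
  finally have "(\<Sum>pp\<in>pairs. sqrt (real (visits T pp))) \<le> sqrt (real (nS * nA) * real T)"
    using real_le_rsqrt sum_nonneg real_sqrt_ge_zero by metis
  then have "(\<Sum>pp\<in>pairs. 8 * sp * sqrt (H * ln (2 * real T / \<delta>)) * sqrt (real (visits T pp)))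
      \<le> 8 * sp * sqrt (H * ln (2 * real T / \<delta>)) * sqrt (real (nS * nA) * real T)"
    using bonus_scale_nonneg by (simp add: sum_distrib_left[symmetric] mult_left_mono)
  moreover have "bonus_total
      \<le> (\<Sum>pp\<in>pairs. 8 * sp * sqrt (H * ln (2 * real T / \<delta>)) * sqrt (real (visits T pp)))"
    unfolding bonus_total_def by (rule sum_mono) (rule sum_bonus_Suc_le)
  ultimately show ?thesis by linarith
qed

lemma bonus_total_nonneg: "0 \<le> bonus_total"
  unfolding bonus_total_def by (intro sum_nonneg) (use bonus_nonneg in auto)

lemma sum_init_or_bonus_visits_le:
  "(\<Sum>t<T. init_or_bonus (visits t (sa t))) \<le> real (nS * nA) * (H + sp) + bonus_total"
proof -
  have "(\<Sum>t<T. init_or_bonus (visits t (sa t)))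
      = (\<Sum>pp\<in>pairs. \<Sum>t<T. if sa t = pp then init_or_bonus (visits t pp) else 0)"
    by (subst sum_split_pairs) (auto intro!: sum.cong)
  also have "\<dots> = (\<Sum>pp\<in>pairs. \<Sum>j<visits T pp. init_or_bonus j)"
    by (intro sum.cong refl sum_lessThan_visits_reindex)
  also have "\<dots> \<le> (\<Sum>pp\<in>pairs. H + sp + (\<Sum>j<visits T pp. bonus (Suc j)))"
    by (intro sum_mono sum_init_or_bonus_le)
  also have "\<dots> = real (nS * nA) * (H + sp) + bonus_total"
    unfolding bonus_total_def by (simp add: sum.distrib card_cartesian_product)
  finally show ?thesis .
qed

lemma sum_bonus_tau: "(\<Sum>i<T. bonus (tau i)) = bonus_total"
proof -
  have "(\<Sum>i<T. bonus (tau i)) = (\<Sum>pp\<in>pairs. \<Sum>t<T. if sa t = pp then bonus (tau t) else 0)"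
    by (rule sum_split_pairs)
  also have "\<dots> = (\<Sum>pp\<in>pairs. \<Sum>t<T. if sa t = pp then bonus (Suc (visits t pp)) else 0)"
    by (intro sum.cong refl) (auto simp: tau_def)
  also have "\<dots> = bonus_total" unfolding bonus_total_def
    by (intro sum.cong refl sum_lessThan_visits_reindex)
  finally show ?thesis .
qed

definition Vhat_excess :: "nat \<Rightarrow> real" where
  "Vhat_excess t = Vhat t (xs t) - Vref (xs t)"

text \<open>Only the entries of \<^term>\<open>Vhat\<close> can decrease, and each by at most \<open>H + sp\<close> overall, so
  replacing \<open>Vhat t\<close> by \<open>Vhat (Suc t)\<close> in \<^term>\<open>Vhat_gap\<close> costs at most \<open>nS (H + sp)\<close> in total.\<close>

lemma sum_Vhat_gap_le:
  assumes conc: concentrated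
  shows "(\<Sum>t<T. Vhat_gap t) \<le> (\<Sum>t<T. Vhat_excess t) + (real nS + 1) * (H + sp)"
proof -
  have opt: "t \<le> T \<Longrightarrow> optimistic t" for t by (rule optimistic_upto[OF conc])
  have drop: "Vhat t (xs (Suc t)) - Vhat (Suc t) (xs (Suc t)) \<le> (\<Sum>s<nS. Vhat t s - Vhat (Suc t) s)" for t
    by (rule member_le_sum) (use xs_rng Vhat_Suc_le in \<open>auto simp: algebra_simps\<close>)
  have "(\<Sum>t<T. \<Sum>s<nS. Vhat t s - Vhat (Suc t) s) = (\<Sum>s<nS. Vhat 0 s - Vhat T s)"
    by (subst sum.swap) (rule sum.cong[OF refl sum_lessThan_telescope'])
  also have "\<dots> \<le> (\<Sum>s<nS. H + sp)"
    using Vref_le_Vhat[OF opt[of T]] Vref_ge by (intro sum_mono) (force simp: initial_values)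
  moreover have "(\<Sum>t<T. Vhat t (xs (Suc t)) - Vhat (Suc t) (xs (Suc t)))
      \<le> (\<Sum>t<T. \<Sum>s<nS. Vhat t s - Vhat (Suc t) s)"
    by (rule sum_mono) (rule drop)
  ultimately have drops: "(\<Sum>t<T. Vhat t (xs (Suc t)) - Vhat (Suc t) (xs (Suc t))) \<le> real nS * (H + sp)"
    by simp
  have "(\<Sum>t<T. Vhat_gap t)
      = (\<Sum>t<T. Vhat_excess (Suc t)) + (\<Sum>t<T. Vhat t (xs (Suc t)) - Vhat (Suc t) (xs (Suc t)))"
    unfolding Vhat_gap_def Vhat_excess_def sum.distrib[symmetric] by simp
  moreover have "(\<Sum>t<T. Vhat_excess (Suc t)) = (\<Sum>t<T. Vhat_excess t) + Vhat_excess T - Vhat_excess 0"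
    using sum.lessThan_Suc_shift[of Vhat_excess T] by simp
  moreover have "0 \<le> Vhat_excess 0"
    unfolding Vhat_excess_def using Vref_le_Vhat[OF opt[of 0] xs_rng] by simp
  moreover have "Vhat_excess T \<le> H + sp"
    unfolding Vhat_excess_def using Vhat_le_H[of T "xs T"] Vref_ge[OF xs_rng] by (smt (verit))
  ultimately show ?thesis using drops by (simp add: algebra_simps)
qed

text \<open>The optimism gaps at the visited pairs feed back into themselves through \<^term>\<open>wsum_cur\<close>,
  but with the contraction factor \<open>discount * (1 + 1/H) \<le> 1\<close>, so their total is bounded by the
  first-visit and bonus terms.\<close>

lemma sum_Vref_minus_Qref_le:
  assumes conc: concentrated
  shows "(\<Sum>t<T. Vref (xs t) - Qref (xs t) (act t))
    \<le> (real (nS * nA) + real nS + 1) * (H + sp) + 3 * bonus_total"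
proof -
  have opt: "t \<le> T \<Longrightarrow> optimistic t" for t by (rule optimistic_upto[OF conc])
  define Y where "Y = (\<Sum>t<T. Vhat_excess t)"
  define Gap where "Gap = (\<Sum>t<T. Vhat_gap t)"
  have gap_nonneg: "t < T \<Longrightarrow> 0 \<le> Vhat_gap t" for t using Vhat_gap_nonneg opt by simp
  have "Gap \<ge> 0" unfolding Gap_def by (rule sum_nonneg) (use gap_nonneg in auto)
  have "(\<Sum>t<T. Vref (xs t) - Qref (xs t) (act t)) + Y
      = (\<Sum>t<T. Qhat t (xs t) (act t) - Qref (xs t) (act t))"
    unfolding Y_def Vhat_excess_def sum.distrib[symmetric] using Vhat_greedy by (intro sum.cong) auto
  also have "\<dots> \<le> (\<Sum>t<T. init_or_bonus (visits t (sa t))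
      + discount * wsum_cur t Vhat_gap + wsum_cur t (\<lambda>i. bonus (tau i)))"
    by (rule sum_mono) (use Qhat_minus_Qref_le[OF conc] in auto)
  also have "\<dots> = (\<Sum>t<T. init_or_bonus (visits t (sa t)))
      + discount * (\<Sum>t<T. wsum_cur t Vhat_gap) + (\<Sum>t<T. wsum_cur t (\<lambda>i. bonus (tau i)))"
    by (simp add: sum.distrib sum_distrib_left)
  also have "\<dots> \<le> (real (nS * nA) * (H + sp) + bonus_total) + discount * ((1 + 1/H) * Gap)
      + (1 + 1/H) * bonus_total"
  proof -
    have "discount * (\<Sum>t<T. wsum_cur t Vhat_gap) \<le> discount * ((1 + 1/H) * Gap)"
      unfolding Gap_def
      by (rule mult_left_mono[OF sum_wsum_cur_le]) (use gap_nonneg discount_bounds in auto)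
    moreover have "(\<Sum>t<T. wsum_cur t (\<lambda>i. bonus (tau i))) \<le> (1 + 1/H) * bonus_total"
      using sum_wsum_cur_le[of "\<lambda>i. bonus (tau i)"] bonus_nonneg sum_bonus_tau by simp
    ultimately show ?thesis using sum_init_or_bonus_visits_le by linarith
  qed
  also have "discount * ((1 + 1/H) * Gap) \<le> Gap"
    using discount_one_plus_inv_H_le \<open>Gap \<ge> 0\<close> by (metis mult.assoc mult_left_le_one_le)
  also have "Gap \<le> Y + (real nS + 1) * (H + sp)" unfolding Y_def Gap_def by (rule sum_Vhat_gap_le[OF conc])
  finally have "(\<Sum>t<T. Vref (xs t) - Qref (xs t) (act t))
      \<le> real (nS * nA) * (H + sp) + bonus_total + (real nS + 1) * (H + sp) + (1 + 1/H) * bonus_total"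
    by simp
  moreover have "(1 + 1/H) * bonus_total \<le> 2 * bonus_total"
    using bonus_total_nonneg H_ge_2 by (intro mult_right_mono) auto
  ultimately show ?thesis by (simp add: algebra_simps)
qed

lemma regret_step_eq:
  "J - r (xs t) (act t) = (J - Vref (xs t) / H) + (Vref (xs t) - Qref (xs t) (act t))
    + discount * (- noise t) + discount * (Vref (xs (Suc t)) - Vref (xs t))"
  unfolding Qref_def noise_def discount_def using H_pos by (simp add: field_simps)

lemma regret_le_if_concentrated:
  assumes conc: concentrated and noise_le: "(\<Sum>t<T. - noise t) \<le> x" and "0 \<le> x"
  shows "(\<Sum>t<T. J - r (xs t) (act t))
    \<le> real T * sp / H + (real (nS * nA) + real nS + 1) * (H + sp) + 3 * bonus_total + x + sp"
proof -
  have "(\<Sum>t<T. J - r (xs t) (act t)) = (\<Sum>t<T. J - Vref (xs t) / H)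
      + (\<Sum>t<T. Vref (xs t) - Qref (xs t) (act t))
      + discount * (\<Sum>t<T. - noise t) + discount * (Vref (xs T) - Vref (xs 0))"
    using sum_lessThan_telescope[of "\<lambda>t. Vref (xs t)" T]
    by (simp only: regret_step_eq sum.distrib sum_distrib_left[symmetric])
  also have "(\<Sum>t<T. J - Vref (xs t) / H) \<le> (\<Sum>t<T. sp / H)"
    using J_minus_Vref_le[OF xs_rng] by (rule sum_mono)
  also have "discount * (\<Sum>t<T. - noise t) \<le> x" using discount_mult_le noise_le \<open>0 \<le> x\<close> .
  also have "discount * (Vref (xs T) - Vref (xs 0)) \<le> sp"
    using Vref_bounds[OF xs_rng, of T] Vref_bounds[OF xs_rng, of 0] sp_pos
    by (intro discount_mult_le) auto
  also note sum_Vref_minus_Qref_le[OF conc]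
  finally show ?thesis by simp
qed

end

section \<open>Concentration\<close>

context optimistic_ql begin

lemma cur_ql_path: "cur_of (ql_path xs t) = xs t"
proof (cases t)
  case 0 then show ?thesis by (simp add: ql_init_def cur_of_def)
next
  case (Suc t') then show ?thesis by (simp add: ql_transition_simps)
qed

lemma ql_run_reachable:
  "st \<in> set_pmf (ql_run nA r p sp T \<delta> H sel s1 k) \<Longrightarrow> \<exists>xs. (\<forall>t. xs t < nS) \<and> st = ql_path xs k"
proof (induction k arbitrary: st)
  case 0
  then have "st = ql_path (\<lambda>_. s1) 0" by simp
  then show ?case using s1_lt by (intro exI[of _ "\<lambda>_. s1"]) auto
next
  case (Suc k)
  from Suc.prems obtain st0 where st0: "st0 \<in> set_pmf (ql_run nA r p sp T \<delta> H sel s1 k)"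
    and st: "st \<in> set_pmf (ql_step nA r p sp T \<delta> H sel st0)" by auto
  obtain xs where xs: "\<forall>t. xs t < nS" "st0 = ql_path xs k" using Suc.IH[OF st0] by blast
  from st obtain s' where s': "s' \<in> set_pmf (p (cur_of st0) (ql_action sel st0))"
    and st_eq: "st = ql_transition nA r sp T \<delta> H sel st0 s'"
    unfolding ql_step_eq_map_transition by auto
  have "cur_of st0 < nS" using xs cur_ql_path by simp
  moreover note ql_action_lt
  ultimately have s'_lt: "s' < nS" using p_support_lt s' by blast
  define ys where "ys = xs(Suc k := s')"
  have "ql_path ys k = ql_path xs k" by (rule ql_path_cong) (auto simp: ys_def)
  then have "st = ql_path ys (Suc k)" using st_eq xs by (simp add: ys_def)
  moreover have "\<forall>t. ys t < nS" using xs s'_lt by (simp add: ys_def)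
  ultimately show ?case by blast
qed

lemma ql_run_trajectory:
  assumes "st \<in> set_pmf (ql_run nA r p sp T \<delta> H sel s1 k)"
  obtains xs where "ql_trajectory nS nA r p J q s1 T \<delta> H sel xs" "st = ql_path xs k"
  using ql_run_reachable[OF assms]
  by (metis ql_trajectory.intro ql_trajectory_axioms.intro optimistic_ql_axioms)

lemma cur_ql_run_lt: "st \<in> set_pmf (ql_run nA r p sp T \<delta> H sel s1 k) \<Longrightarrow> cur_of st < nS"
  using ql_run_reachable cur_ql_path by metis

definition hist_state :: "qstate \<Rightarrow> nat \<Rightarrow> nat" where
  "hist_state st i = (if i < length (hist_of st) then fst (hist_of st ! i) else cur_of st)"

text \<open>\<^term>\<open>mart c st\<close> is the martingale transform of the increments \<open>Vref s\<^sub>i\<^sub>+\<^sub>1 - PVref s\<^sub>i a\<^sub>i\<close>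
  along the history of \<open>st\<close>, where the coefficient of step \<open>i\<close> may depend on the history before
  \<open>i\<close>.  Each increment ranges over an interval of length \<open>sp\<close>, so by Hoeffding's lemma
  \<^term>\<open>mart_exp c l\<close> is a supermartingale.\<close>

definition mart :: "((nat \<times> nat) list \<Rightarrow> nat \<times> nat \<Rightarrow> real) \<Rightarrow> qstate \<Rightarrow> real" where
  "mart c st = (\<Sum>i<length (hist_of st). c (take i (hist_of st)) (hist_of st ! i) *
      (Vref (hist_state st (Suc i)) - PVref (fst (hist_of st ! i)) (snd (hist_of st ! i))))"

definition mart_var :: "((nat \<times> nat) list \<Rightarrow> nat \<times> nat \<Rightarrow> real) \<Rightarrow> qstate \<Rightarrow> real" where
  "mart_var c st = (\<Sum>i<length (hist_of st). (c (take i (hist_of st)) (hist_of st ! i))\<^sup>2)"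

definition mart_exp :: "((nat \<times> nat) list \<Rightarrow> nat \<times> nat \<Rightarrow> real) \<Rightarrow> real \<Rightarrow> qstate \<Rightarrow> real" where
  "mart_exp c l st = exp (l * mart c st - l\<^sup>2 * sp\<^sup>2 * mart_var c st / 8)"

lemma mart_transition:
  fixes st s'
  defines "st' \<equiv> ql_transition nA r sp T \<delta> H sel st s'"
  shows "mart c st' = mart c st
      + c (hist_of st) (cur_of st, ql_action sel st) * (Vref s' - PVref (cur_of st) (ql_action sel st))"
    and "mart_var c st' = mart_var c st + (c (hist_of st) (cur_of st, ql_action sel st))\<^sup>2"
proof -
  define h where "h = hist_of st"
  define x where "x = (cur_of st, ql_action sel st)"
  have h': "hist_of st' = h @ [x]" unfolding st'_def h_def x_def by (simp add: ql_transition_simps)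
  have tr: "hist_state st' (Suc i) = hist_state st (Suc i)" if "i < length h" for i
  proof (cases "Suc i < length h")
    case True then show ?thesis unfolding hist_state_def h' h_def[symmetric] by (simp add: nth_append)
  next
    case False
    then have "Suc i = length h" using that by simp
    then show ?thesis unfolding hist_state_def h' h_def[symmetric] x_def by (simp add: nth_append)
  qed
  have "hist_state st' (Suc (length h)) = s'"
    unfolding hist_state_def h' by (simp add: st'_def ql_transition_simps)
  then show "mart c st' = mart c st
      + c (hist_of st) (cur_of st, ql_action sel st) * (Vref s' - PVref (cur_of st) (ql_action sel st))"
    unfolding mart_def h' h_def[symmetric] x_def[symmetric] using tr by (simp add: nth_append x_def)
  show "mart_var c st' = mart_var c st + (c (hist_of st) (cur_of st, ql_action sel st))\<^sup>2"
    unfolding mart_var_def h' h_def[symmetric] x_def[symmetric] by (simp add: nth_append x_def)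
qed

lemma mart_exp_transition:
  fixes c st s'
  defines "cc \<equiv> c (hist_of st) (cur_of st, ql_action sel st)"
  shows "mart_exp c l (ql_transition nA r sp T \<delta> H sel st s')
    = mart_exp c l st * exp (- (l\<^sup>2 * sp\<^sup>2 * cc\<^sup>2 / 8))
      * exp (l * cc * (Vref s' - PVref (cur_of st) (ql_action sel st)))"
  unfolding mart_exp_def mart_transition cc_def mult_exp_exp by (simp add: algebra_simps)

lemma mart_exp_step_le:
  assumes "cur_of st < nS"
  shows "(\<integral>\<^sup>+st'. ennreal (mart_exp c l st') \<partial>ql_step nA r p sp T \<delta> H sel st) \<le> ennreal (mart_exp c l st)"
proof -
  define s where "s = cur_of st"
  define a where "a = ql_action sel st"
  define cc where "cc = c (hist_of st) (s, a)"
  define K where "K = mart_exp c l st * exp (- (l\<^sup>2 * sp\<^sup>2 * cc\<^sup>2 / 8))"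
  have "s < nS" using assms s_def by simp
  moreover have "a < nA" unfolding a_def by (rule ql_action_lt)
  ultimately have Vref_range: "H * J - sp \<le> Vref s' \<and> Vref s' \<le> H * J" if "s' \<in> set_pmf (p s a)" for s'
    using Vref_bounds p_support_lt that by blast
  have K: "0 \<le> K" unfolding K_def mart_exp_def by simp
  have step: "mart_exp c l (ql_transition nA r sp T \<delta> H sel st s')
      = K * exp (l * cc * (Vref s' - PVref s a))"
    for s' by (simp add: mart_exp_transition K_def s_def a_def cc_def)
  have "(\<integral>\<^sup>+st'. ennreal (mart_exp c l st') \<partial>ql_step nA r p sp T \<delta> H sel st)
      = (\<integral>\<^sup>+s'. ennreal (mart_exp c l (ql_transition nA r sp T \<delta> H sel st s')) \<partial>p s a)"
    unfolding ql_step_eq_map_transition s_def a_def by simp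
  also have "\<dots> = (\<integral>\<^sup>+s'. ennreal K * ennreal (exp (l * cc * (Vref s' - PVref s a))) \<partial>p s a)"
    by (simp add: step K ennreal_mult)
  also have "\<dots> = ennreal K * (\<integral>\<^sup>+s'. ennreal (exp (l * cc * (Vref s' - PVref s a))) \<partial>p s a)"
    by (rule nn_integral_cmult) simp
  also have "\<dots> \<le> ennreal K * ennreal (exp ((l * cc)\<^sup>2 * (H * J - (H * J - sp))\<^sup>2 / 8))"
    unfolding PVref_def by (intro mult_left_mono hoeffding_lemma_pmf Vref_range) auto
  also have "\<dots> = ennreal (mart_exp c l st)"
    using K
    by (simp add: K_def ennreal_mult[symmetric] mult.assoc mult_exp_exp power_mult_distrib algebra_simps)
  finally show ?thesis .
qed

lemma mart_exp_ql_run_le: "(\<integral>\<^sup>+st. ennreal (mart_exp c l st) \<partial>ql_run nA r p sp T \<delta> H sel s1 k) \<le> 1"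
proof (induction k)
  case 0
  have "mart_exp c l (ql_init H s1) = 1"
    unfolding mart_exp_def mart_def mart_var_def by (simp add: ql_init_def hist_of_def)
  then show ?case by simp
next
  case (Suc k)
  have "(\<integral>\<^sup>+st. ennreal (mart_exp c l st) \<partial>ql_run nA r p sp T \<delta> H sel s1 (Suc k))
      = (\<integral>\<^sup>+st. (\<integral>\<^sup>+st'. ennreal (mart_exp c l st') \<partial>ql_step nA r p sp T \<delta> H sel st)
          \<partial>ql_run nA r p sp T \<delta> H sel s1 k)"
    by (simp only: ql_run.simps nn_integral_bind_pmf)
  also have "\<dots> \<le> (\<integral>\<^sup>+st. ennreal (mart_exp c l st) \<partial>ql_run nA r p sp T \<delta> H sel s1 k)"
    by (rule nn_integral_mono_AE)
      (auto simp: AE_measure_pmf_iff intro!: mart_exp_step_le cur_ql_run_lt)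
  also have "\<dots> \<le> 1" by (rule Suc)
  finally show ?case .
qed

lemma prob_mart_ge_le:
  assumes var_le: "\<And>st. st \<in> set_pmf M \<Longrightarrow> mart_var c st \<le> Vb" and l: "l > 0"
    and exp_le_1: "(\<integral>\<^sup>+st. ennreal (mart_exp c l st) \<partial>M) \<le> 1"
  shows "measure_pmf.prob M {st. x \<le> mart c st} \<le> exp (- l * x + l\<^sup>2 * sp\<^sup>2 * Vb / 8)"
proof -
  define \<theta> where "\<theta> = exp (l * x - l\<^sup>2 * sp\<^sup>2 * Vb / 8)"
  have \<theta>: "\<theta> > 0" unfolding \<theta>_def by simp
  define A where "A = {st. x \<le> mart c st}"
  have ind: "indicator A st \<le> ennreal (1 / \<theta>) * ennreal (mart_exp c l st)" if st: "st \<in> set_pmf M" for st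
  proof (cases "st \<in> A")
    case True
    then have "x \<le> mart c st" unfolding A_def by simp
    then have lx: "l * x \<le> l * mart c st" using l by (intro mult_left_mono) auto
    have "l\<^sup>2 * sp\<^sup>2 * mart_var c st \<le> l\<^sup>2 * sp\<^sup>2 * Vb" by (rule mult_left_mono) (use var_le[OF st] in auto)
    then have "l * x - l\<^sup>2 * sp\<^sup>2 * Vb / 8 \<le> l * mart c st - l\<^sup>2 * sp\<^sup>2 * mart_var c st / 8"
      using lx by linarith
    then have "\<theta> \<le> mart_exp c l st" unfolding \<theta>_def mart_exp_def by (rule exp_mono)
    then have "1 \<le> mart_exp c l st / \<theta>" using \<theta> by (simp add: le_divide_eq)
    then have "ennreal 1 \<le> ennreal (1 / \<theta> * mart_exp c l st)" by (intro ennreal_leI) simp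
    also have "ennreal (1 / \<theta> * mart_exp c l st) = ennreal (1 / \<theta>) * ennreal (mart_exp c l st)"
      by (rule ennreal_mult) (use \<theta> in \<open>auto simp: mart_exp_def\<close>)
    finally show ?thesis using True by simp
  next
    case False then show ?thesis by simp
  qed
  have "emeasure M A = (\<integral>\<^sup>+st. indicator A st \<partial>M)" by (rule nn_integral_indicator[symmetric]) simp
  also have "\<dots> \<le> (\<integral>\<^sup>+st. ennreal (1 / \<theta>) * ennreal (mart_exp c l st) \<partial>M)"
    by (rule nn_integral_mono_AE) (use ind in \<open>simp add: AE_measure_pmf_iff\<close>)
  also have "\<dots> = ennreal (1 / \<theta>) * (\<integral>\<^sup>+st. ennreal (mart_exp c l st) \<partial>M)"
    by (rule nn_integral_cmult) simp
  also have "\<dots> \<le> ennreal (1 / \<theta>) * 1" by (rule mult_left_mono[OF exp_le_1]) simp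
  finally have "ennreal (measure_pmf.prob M A) \<le> ennreal (1 / \<theta>)"
    by (simp only: measure_pmf.emeasure_eq_measure mult_1_right)
  moreover have "0 \<le> 1 / \<theta>" using \<theta> by simp
  ultimately have "measure_pmf.prob M A \<le> 1 / \<theta>" using ennreal_le_iff by blast
  also have "1 / \<theta> = exp (- (l * x - l\<^sup>2 * sp\<^sup>2 * Vb / 8))"
    unfolding \<theta>_def exp_minus by (simp only: inverse_eq_divide)
  also have "- (l * x - l\<^sup>2 * sp\<^sup>2 * Vb / 8) = - l * x + l\<^sup>2 * sp\<^sup>2 * Vb / 8" by simp
  finally show ?thesis unfolding A_def .
qed

lemma azuma_ql_run:
  assumes var_le: "\<And>st. st \<in> set_pmf (ql_run nA r p sp T \<delta> H sel s1 k) \<Longrightarrow> mart_var c st \<le> Vb"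
    and x: "x > 0" and Vb: "Vb > 0"
  shows "measure_pmf.prob (ql_run nA r p sp T \<delta> H sel s1 k) {st. x \<le> mart c st}
    \<le> exp (- 2 * x\<^sup>2 / (sp\<^sup>2 * Vb))"
proof -
  define l where "l = 4 * x / (sp\<^sup>2 * Vb)"
  have l: "l > 0" unfolding l_def using x Vb sp_pos by simp
  have "measure_pmf.prob (ql_run nA r p sp T \<delta> H sel s1 k) {st. x \<le> mart c st}
      \<le> exp (- l * x + l\<^sup>2 * sp\<^sup>2 * Vb / 8)"
    by (rule prob_mart_ge_le[OF var_le l mart_exp_ql_run_le])
  also have "- l * x + l\<^sup>2 * sp\<^sup>2 * Vb / 8 = - 2 * x\<^sup>2 / (sp\<^sup>2 * Vb)"
    unfolding l_def using Vb sp_pos by (simp add: field_simps power2_eq_square)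
  finally show ?thesis .
qed

text \<open>With these coefficients \<^term>\<open>mart\<close> is \<open>\<sigma>\<close> times the learning-rate average, for \<open>\<tau>\<close>
  updates, of the noise at the visits to \<open>(s, a)\<close> (\<open>mart_visit_coeff\<close>); they depend on the past only
  through the number of earlier visits.\<close>

definition visit_coeff :: "nat \<Rightarrow> nat \<Rightarrow> nat \<Rightarrow> real \<Rightarrow> (nat \<times> nat) list \<Rightarrow> nat \<times> nat \<Rightarrow> real" where
  "visit_coeff s a \<tau> \<sigma> h pp = (if pp = (s, a) then \<sigma> * lr_weight H (count_list h (s, a) + 1) \<tau> else 0)"

end

context ql_trajectory begin

lemma count_list_sa: "count_list (map sa [0..<i]) pp = visits i pp"
  by (induction i) auto

lemma hist_state_state_at: "i < T' \<Longrightarrow> hist_state (state_at T') (Suc i) = xs (Suc i)"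
proof -
  assume i: "i < T'"
  show ?thesis
  proof (cases "Suc i < T'")
    case True then show ?thesis unfolding hist_state_def hist_state_at by (simp add: sa_def)
  next
    case False
    then have "Suc i = T'" using i by simp
    then show ?thesis unfolding hist_state_def hist_state_at by (simp add: cur_state_at)
  qed
qed

lemma mart_state_at: "mart c (state_at T') = (\<Sum>i<T'. c (map sa [0..<i]) (sa i) * noise i)"
  unfolding mart_def hist_state_at
  by (rule sum.cong) (auto simp: take_map hist_state_state_at noise_def sa_def)

lemma mart_var_state_at: "mart_var c (state_at T') = (\<Sum>i<T'. (c (map sa [0..<i]) (sa i))\<^sup>2)"
  unfolding mart_var_def hist_state_at
  by (rule sum.cong) (auto simp: take_map)

lemma regret_state_at: "regret r J (hist_of (state_at T')) = (\<Sum>t<T'. J - r (xs t) (act t))"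
  unfolding regret_def hist_state_at map_map
  by (simp add: interv_sum_list_conv_sum_set_nat atLeast_upt comp_def sa_def)

lemma mart_visit_coeff: "mart (visit_coeff s a \<tau> \<sigma>) (state_at T) = \<sigma> * wsum T (s, a) \<tau> noise"
  unfolding mart_state_at wsum_def visit_coeff_def count_list_sa sum_distrib_left
  by (rule sum.cong) auto

lemma mart_var_visit_coeff_le:
  assumes "\<sigma>\<^sup>2 = 1" "1 \<le> \<tau>"
  shows "mart_var (visit_coeff s a \<tau> \<sigma>) (state_at T) \<le> 2 * H / real \<tau>"
proof -
  have "mart_var (visit_coeff s a \<tau> \<sigma>) (state_at T)
      = (\<Sum>i<T. if sa i = (s, a) then (lr_weight H (Suc (visits i (s, a))) \<tau>)\<^sup>2 else 0)"
    unfolding mart_var_state_at visit_coeff_def count_list_sa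
    by (rule sum.cong) (auto simp: power_mult_distrib assms(1))
  also have "\<dots> = (\<Sum>j<visits T (s, a). (lr_weight H (Suc j) \<tau>)\<^sup>2)"
    by (rule sum_lessThan_visits_reindex)
  also have "\<dots> \<le> (\<Sum>j<\<tau>. (lr_weight H (Suc j) \<tau>)\<^sup>2)" by (rule sum_lr_weight_squared_prefix_le)
  also have "\<dots> \<le> (H + 1) / (H + real \<tau>)" by (rule sum_lr_weight_squared_le[OF H_pos assms(2)])
  also have "\<dots> \<le> 2 * H / real \<tau>"
  proof -
    have \<tau>: "real \<tau> \<ge> 1" using assms(2) by simp
    have "(H + 1) * real \<tau> \<le> 2 * H * (H + real \<tau>)"
    proof -
      have "(H + 1) * real \<tau> \<le> (2 * H) * real \<tau>" using H_ge_2 \<tau> by (intro mult_right_mono) auto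
      also have "\<dots> \<le> 2 * H * (H + real \<tau>)" using H_ge_2 by (intro mult_left_mono) auto
      finally show ?thesis .
    qed
    then show ?thesis using \<tau> H_pos by (simp add: field_simps)
  qed
  finally show ?thesis .
qed

lemma mart_const: "mart (\<lambda>_ _. -1) (state_at T) = (\<Sum>t<T. - noise t)"
  unfolding mart_state_at by simp

lemma mart_var_const: "mart_var (\<lambda>_ _. -1) (state_at T) = real T"
  unfolding mart_var_state_at by simp

lemma concentrated_if_mart_visit_coeff_lt:
  assumes "\<And>s a \<tau> \<sigma>. s < nS \<Longrightarrow> a < nA \<Longrightarrow> 1 \<le> \<tau> \<Longrightarrow> \<tau> \<le> T \<Longrightarrow> \<sigma> \<in> {1, -1} \<Longrightarrow>
      mart (visit_coeff s a \<tau> \<sigma>) (state_at T) < bonus \<tau>"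
  shows concentrated
  unfolding concentrated_def
proof (intro allI impI)
  fix s a \<tau> assume "s < nS" "a < nA" "1 \<le> \<tau>" "\<tau> \<le> T"
  from assms[OF this, of 1] assms[OF this, of "-1"]
  show "\<bar>wsum T (s, a) \<tau> noise\<bar> \<le> bonus \<tau>" by (simp add: mart_visit_coeff)
qed

end

context optimistic_ql begin

definition noise_dev :: real where
  "noise_dev = sp * sqrt (real T * ln (2 / \<delta>) / 2)"

definition regret_bound :: real where
  "regret_bound = real T * sp / H + (real (nS * nA) + real nS + 1) * (H + sp)
     + 3 * (8 * sp * sqrt (H * ln (2 * real T / \<delta>)) * sqrt (real (nS * nA) * real T)) + noise_dev + sp"

definition visit_event :: "nat \<Rightarrow> nat \<Rightarrow> nat \<Rightarrow> real \<Rightarrow> qstate set" where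
  "visit_event s a \<tau> \<sigma> = {st. bonus \<tau> \<le> mart (visit_coeff s a \<tau> \<sigma>) st}"

definition noise_event :: "qstate set" where
  "noise_event = {st. noise_dev \<le> mart (\<lambda>_ _. -1) st}"

lemma noise_dev_pos: "0 < noise_dev"
  unfolding noise_dev_def using sp_pos delta_pos delta_lt_1 T_ge_1 by simp

lemma regret_le_bound_if_concentrated:
  assumes st: "st \<in> set_pmf (ql_run nA r p sp T \<delta> H sel s1 T)"
    and no_visit_event: "\<And>s a \<tau> \<sigma>. s < nS \<Longrightarrow> a < nA \<Longrightarrow> 1 \<le> \<tau> \<Longrightarrow> \<tau> \<le> T \<Longrightarrow> \<sigma> \<in> {1, -1} \<Longrightarrow>
        st \<notin> visit_event s a \<tau> \<sigma>"
    and no_noise_event: "st \<notin> noise_event"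
  shows "regret r J (fst st) \<le> regret_bound"
proof -
  obtain xs where X: "ql_trajectory nS nA r p J q s1 T \<delta> H sel xs" and st_eq: "st = ql_path xs T"
    using ql_run_trajectory[OF st] .
  interpret X: ql_trajectory nS nA r p J q s1 T \<delta> H sel xs by (rule X)
  have st_eq: "st = X.state_at T" using st_eq by (simp add: X.state_at_def)
  have "X.concentrated"
  proof (rule X.concentrated_if_mart_visit_coeff_lt)
    fix s a \<tau> and \<sigma> :: real assume "s < nS" "a < nA" "1 \<le> \<tau>" "\<tau> \<le> T" "\<sigma> \<in> {1, -1}"
    from no_visit_event[OF this] show "mart (visit_coeff s a \<tau> \<sigma>) (X.state_at T) < bonus \<tau>"
      by (simp add: visit_event_def st_eq)
  qed
  moreover have "(\<Sum>t<T. - X.noise t) \<le> noise_dev"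
    using no_noise_event by (simp add: noise_event_def st_eq X.mart_const)
  ultimately have "(\<Sum>t<T. J - r (xs t) (X.act t)) \<le> real T * sp / H
      + (real (nS * nA) + real nS + 1) * (H + sp) + 3 * X.bonus_total + noise_dev + sp"
    using noise_dev_pos by (intro X.regret_le_if_concentrated) auto
  then show ?thesis
    using X.bonus_total_le X.regret_state_at[of T] by (simp add: regret_bound_def st_eq hist_of_def)
qed

lemma azuma_visit_tail_le:
  assumes t: "1 \<le> \<tau>" and SA_le_T: "real nS * real nA \<le> real T"
  shows "exp (- 2 * (bonus \<tau>)\<^sup>2 / (sp\<^sup>2 * (2 * H / real \<tau>))) \<le> \<delta> / (4 * (real nS * real nA * real T))"
proof -
  define L where "L = ln (2 * real T / \<delta>)"
  have L: "0 < L" unfolding L_def by (rule ln_2T_pos)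
  have "(bonus \<tau>)\<^sup>2 = 16 * sp\<^sup>2 * (H / real \<tau> * L)"
    using H_pos L unfolding bonus_def ql_bonus_def L_def by (simp add: power_mult_distrib)
  then have "- 2 * (bonus \<tau>)\<^sup>2 / (sp\<^sup>2 * (2 * H / real \<tau>)) = - 16 * L"
    using sp_pos H_pos t by (simp add: field_simps power2_eq_square)
  then have "exp (- 2 * (bonus \<tau>)\<^sup>2 / (sp\<^sup>2 * (2 * H / real \<tau>))) \<le> exp (- (L + L))" using L by simp
  also have "exp (- (L + L)) = 1 / (exp L * exp L)" by (simp only: exp_minus exp_add inverse_eq_divide)
  also have "exp L = 2 * real T / \<delta>" unfolding L_def using delta_pos T_ge_1 by simp
  also have "1 / (2 * real T / \<delta> * (2 * real T / \<delta>)) = \<delta> * \<delta> / (4 * real T * real T)"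
    using delta_pos T_ge_1 by (simp add: field_simps)
  also have "\<dots> \<le> \<delta> / (4 * (real nS * real nA * real T))"
  proof -
    have SA_pos: "0 < real nS * real nA" using nS_pos nA_pos by simp
    have "\<delta> * (real nS * real nA) \<le> real T"
      using mult_right_mono[OF less_imp_le[OF delta_lt_1] less_imp_le[OF SA_pos]] SA_le_T by simp
    then have "\<delta> * \<delta> * (4 * (real nS * real nA * real T)) \<le> \<delta> * (4 * real T * real T)"
      using delta_pos T_ge_1 by (simp add: algebra_simps mult_left_mono)
    then show ?thesis using delta_pos T_ge_1 SA_pos by (simp add: field_simps)
  qed
  finally show ?thesis .
qed

lemma prob_visit_event_le:
  assumes "1 \<le> \<tau>" "\<sigma> \<in> {1, -1}" and SA_le_T: "real nS * real nA \<le> real T"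
  shows "measure_pmf.prob (ql_run nA r p sp T \<delta> H sel s1 T) (visit_event s a \<tau> \<sigma>)
    \<le> \<delta> / (4 * (real nS * real nA * real T))"
proof -
  have var: "mart_var (visit_coeff s a \<tau> \<sigma>) st \<le> 2 * H / real \<tau>"
    if st: "st \<in> set_pmf (ql_run nA r p sp T \<delta> H sel s1 T)" for st
  proof -
    obtain xs where "ql_trajectory nS nA r p J q s1 T \<delta> H sel xs" "st = ql_path xs T"
      using ql_run_trajectory[OF st] .
    then show ?thesis
      using ql_trajectory.mart_var_visit_coeff_le[of nS nA r p J q s1 T \<delta> H sel xs \<sigma> \<tau>] assms(1,2)
      by (auto simp: ql_trajectory.state_at_def)
  qed
  have "0 < bonus \<tau>" unfolding bonus_def ql_bonus_def using sp_pos H_pos ln_2T_pos assms(1) by simp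
  moreover have "0 < 2 * H / real \<tau>" using H_pos assms(1) by simp
  ultimately show ?thesis
    unfolding visit_event_def using azuma_ql_run[OF var] azuma_visit_tail_le[OF assms(1) SA_le_T] by fastforce
qed

lemma prob_noise_event_le: "measure_pmf.prob (ql_run nA r p sp T \<delta> H sel s1 T) noise_event \<le> \<delta> / 2"
proof -
  have var: "mart_var (\<lambda>_ _. -1) st \<le> real T"
    if st: "st \<in> set_pmf (ql_run nA r p sp T \<delta> H sel s1 T)" for st
  proof -
    obtain xs where X: "ql_trajectory nS nA r p J q s1 T \<delta> H sel xs" and "st = ql_path xs T"
      using ql_run_trajectory[OF st] .
    then show ?thesis
      using ql_trajectory.mart_var_const[OF X] by (simp add: ql_trajectory.state_at_def[OF X])
  qed
  have "noise_dev\<^sup>2 = sp\<^sup>2 * (real T * ln (2 / \<delta>) / 2)"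
    unfolding noise_dev_def using delta_pos delta_lt_1 by (simp add: power_mult_distrib)
  then have "exp (- 2 * noise_dev\<^sup>2 / (sp\<^sup>2 * real T)) = \<delta> / 2"
    using sp_pos T_ge_1 delta_pos by (simp add: field_simps exp_minus)
  moreover have "measure_pmf.prob (ql_run nA r p sp T \<delta> H sel s1 T) noise_event
      \<le> exp (- 2 * noise_dev\<^sup>2 / (sp\<^sup>2 * real T))"
    unfolding noise_event_def by (rule azuma_ql_run[OF var noise_dev_pos]) (use T_ge_1 in auto)
  ultimately show ?thesis by simp
qed

lemma prob_regret_le_bound:
  assumes SA_le_T: "real nS * real nA \<le> real T"
  shows "1 - \<delta>
    \<le> measure_pmf.prob (ql_run nA r p sp T \<delta> H sel s1 T) {st. regret r J (fst st) \<le> regret_bound}"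
proof -
  define M where "M = ql_run nA r p sp T \<delta> H sel s1 T"
  define I where "I = {..<nS} \<times> {..<nA} \<times> {1..T} \<times> {1::real, -1}"
  define Bad where "Bad = (\<Union>(s, a, \<tau>, \<sigma>)\<in>I. visit_event s a \<tau> \<sigma>)"
  define G where "G = {st::qstate. regret r J (fst st) \<le> regret_bound}"
  have "set_pmf M \<subseteq> G \<union> (Bad \<union> noise_event)"
    using regret_le_bound_if_concentrated unfolding M_def G_def Bad_def I_def by fastforce
  then have "measure_pmf.prob M (G \<union> (Bad \<union> noise_event)) = 1"
    by (subst measure_pmf.prob_eq_1) (auto simp: AE_measure_pmf_iff)
  then have "1 = measure_pmf.prob M (G \<union> (Bad \<union> noise_event))" ..
  also have "\<dots> \<le> measure_pmf.prob M G + measure_pmf.prob M (Bad \<union> noise_event)"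
    by (rule measure_subadditive) (auto simp: measure_pmf.emeasure_eq_measure)
  also have "measure_pmf.prob M (Bad \<union> noise_event)
      \<le> measure_pmf.prob M Bad + measure_pmf.prob M noise_event"
    by (rule measure_subadditive) (auto simp: measure_pmf.emeasure_eq_measure)
  also have "measure_pmf.prob M Bad \<le> (\<Sum>(s, a, \<tau>, \<sigma>)\<in>I. measure_pmf.prob M (visit_event s a \<tau> \<sigma>))"
    unfolding Bad_def I_def
    by (rule order_trans[OF measure_pmf.finite_measure_subadditive_finite]) (auto simp: case_prod_beta)
  also have "\<dots> \<le> (\<Sum>i\<in>I. \<delta> / (4 * (real nS * real nA * real T)))"
    unfolding M_def I_def by (rule sum_mono) (auto intro!: prob_visit_event_le SA_le_T)
  also have "\<dots> = \<delta> / 2"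
    using nS_pos nA_pos T_ge_1 by (simp add: I_def card_cartesian_product)
  also have "measure_pmf.prob M noise_event \<le> \<delta> / 2" unfolding M_def by (rule prob_noise_event_le)
  finally show ?thesis unfolding M_def G_def by simp
qed

end

section \<open>Choice of the horizon \<open>H\<close>\<close>

locale horizon_choice =
  fixes K Tr s \<delta> H :: real
  assumes K_ge_1: "1 \<le> K" and Tr_ge_1: "1 \<le> Tr" and delta_pos: "0 < \<delta>" and delta_lt_1: "\<delta> < 1"
    and H_def: "H = min (sqrt (s * Tr / K)) ((Tr / (K * ln (4 * Tr / \<delta>))) powr (1/3))"
    and H_ge_2: "2 \<le> H"
begin

definition Tr_cbrt :: real where "Tr_cbrt = Tr powr (1/3)"
definition KL_cbrt :: real where "KL_cbrt = (K * ln (Tr / \<delta>)) powr (1/3)"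
definition KL4_cbrt :: real where "KL4_cbrt = (K * ln (4 * Tr / \<delta>)) powr (1/3)"

lemma K_pos: "0 < K" and Tr_pos: "0 < Tr"
  using K_ge_1 Tr_ge_1 by auto

lemma H_le_sqrt: "H \<le> sqrt (s * Tr / K)"
  and H_le_cbrt: "H \<le> (Tr / (K * ln (4 * Tr / \<delta>))) powr (1/3)"
  using H_def by auto

lemma s_pos: "0 < s"
proof -
  have "0 < sqrt (s * Tr / K)" using H_le_sqrt H_ge_2 by linarith
  then show ?thesis using K_pos Tr_pos by (simp add: zero_less_divide_iff zero_less_mult_iff)
qed

lemma ln_4Tr_gt_1: "1 < ln (4 * Tr / \<delta>)"
  by (rule ln_gt_1) (use Tr_ge_1 delta_pos delta_lt_1 in \<open>simp add: field_simps\<close>)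

lemma Tr_ge_8KL: "8 * (K * ln (4 * Tr / \<delta>)) \<le> Tr"
proof -
  have "(2::real) ^ 3 \<le> ((Tr / (K * ln (4 * Tr / \<delta>))) powr (1/3)) ^ 3"
    using H_le_cbrt H_ge_2 by (intro power_mono) auto
  also have "\<dots> = Tr / (K * ln (4 * Tr / \<delta>))"
    using Tr_pos K_pos ln_4Tr_gt_1 by (intro powr_one_third_power_3) simp
  finally show ?thesis using K_pos ln_4Tr_gt_1 by (simp add: field_simps)
qed

lemma K_le_Tr: "K \<le> Tr"
  using Tr_ge_8KL K_pos ln_4Tr_gt_1 by (smt (verit) mult_le_cancel_left1)

lemma Tr_div_delta_gt_8: "8 < Tr / \<delta>"
proof -
  have "Tr < Tr / \<delta>" using Tr_pos delta_pos delta_lt_1 by (simp add: less_divide_eq)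
  moreover have "8 < Tr" using Tr_ge_8KL K_ge_1 ln_4Tr_gt_1 by (smt (verit) mult_less_cancel_left1)
  ultimately show ?thesis by simp
qed

lemma ln_Tr_gt_1: "1 < ln (Tr / \<delta>)"
  using Tr_div_delta_gt_8 by (intro ln_gt_1) simp

lemma ln_4Tr_le: "ln (4 * Tr / \<delta>) \<le> 2 * ln (Tr / \<delta>)"
proof -
  have "ln (4 * Tr / \<delta>) = ln 4 + ln (Tr / \<delta>)"
    using Tr_pos delta_pos by (simp add: ln_mult_pos[symmetric])
  moreover have "ln 4 \<le> ln (Tr / \<delta>)"
    using Tr_div_delta_gt_8 by (subst ln_le_cancel_iff) auto
  ultimately show ?thesis by simp
qed

lemma K_mult_sqrt: "K * sqrt (s * Tr / K) = sqrt (s * K * Tr)"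
proof -
  have "K\<^sup>2 * (s * Tr / K) = s * K * Tr" using K_pos by (simp add: power2_eq_square field_simps)
  then show ?thesis using K_pos by (metis abs_of_pos real_sqrt_abs real_sqrt_mult)
qed

lemma Tr_cbrt_bounds: "0 < Tr_cbrt" "Tr_cbrt ^ 3 = Tr" "1 \<le> Tr_cbrt"
  using Tr_pos Tr_ge_1 powr_one_third_power_3[of Tr] unfolding Tr_cbrt_def
  by (auto intro: power_3_le_imp_le)

lemma KL_cbrt_bounds: "0 < KL_cbrt" "KL_cbrt ^ 3 = K * ln (Tr / \<delta>)" "1 \<le> KL_cbrt"
proof -
  have "1 \<le> K * ln (Tr / \<delta>)" using K_ge_1 ln_Tr_gt_1 by (smt (verit) mult_le_cancel_left1)
  then show "0 < KL_cbrt" "KL_cbrt ^ 3 = K * ln (Tr / \<delta>)" "1 \<le> KL_cbrt"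
    using powr_one_third_power_3[of "K * ln (Tr / \<delta>)"] unfolding KL_cbrt_def
    by (auto intro: power_3_le_imp_le)
qed

lemma KL4_cbrt_bounds: "0 < KL4_cbrt" "KL4_cbrt ^ 3 = K * ln (4 * Tr / \<delta>)" "KL4_cbrt \<le> 2 * KL_cbrt"
proof -
  show "0 < KL4_cbrt" unfolding KL4_cbrt_def using K_pos ln_4Tr_gt_1 by simp
  show cube: "KL4_cbrt ^ 3 = K * ln (4 * Tr / \<delta>)"
    unfolding KL4_cbrt_def using K_pos ln_4Tr_gt_1 by (intro powr_one_third_power_3) simp
  have "ln (4 * Tr / \<delta>) \<le> 8 * ln (Tr / \<delta>)" using ln_4Tr_le ln_Tr_gt_1 by linarith
  then have "K * ln (4 * Tr / \<delta>) \<le> K * (8 * ln (Tr / \<delta>))"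
    using K_pos by (intro mult_left_mono) auto
  then have "KL4_cbrt ^ 3 \<le> (2 * KL_cbrt) ^ 3"
    using cube KL_cbrt_bounds(2) by (simp add: power_mult_distrib)
  moreover have "0 \<le> 2 * KL_cbrt" using KL_cbrt_bounds(1) by simp
  ultimately show "KL4_cbrt \<le> 2 * KL_cbrt" by (metis power_3_le_imp_le)
qed

lemma Tr_cbrt_KL4_cbrt_le: "Tr_cbrt\<^sup>2 * KL4_cbrt \<le> 2 * (Tr_cbrt\<^sup>2 * KL_cbrt)"
  using mult_left_mono[OF KL4_cbrt_bounds(3), of "Tr_cbrt\<^sup>2"] by simp

lemma H_le_Tr_cbrt_div: "H \<le> Tr_cbrt / KL4_cbrt"
  using H_le_cbrt Tr_pos K_pos ln_4Tr_gt_1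
  by (simp add: Tr_cbrt_def KL4_cbrt_def powr_divide)

lemma rate_eq: "Tr powr (2/3) * (K * ln (Tr / \<delta>)) powr (1/3) = Tr_cbrt\<^sup>2 * KL_cbrt"
proof -
  have "Tr powr (2/3) = Tr powr (1/3 + 1/3)" by simp
  also have "\<dots> = Tr_cbrt * Tr_cbrt" unfolding Tr_cbrt_def by (rule powr_add)
  finally show ?thesis unfolding KL_cbrt_def by (simp add: power2_eq_square)
qed

text \<open>The two candidates for \<open>H\<close> balance \<open>Tr s / H\<close> against \<open>K H\<close> and against the bonus term
  \<open>s sqrt (H K Tr ln (Tr / \<delta>))\<close>; every term is bounded by \<open>sqrt (s K Tr)\<close> or
  \<open>s Tr\<^bsup>2/3\<^esup> (K ln (Tr / \<delta>))\<^bsup>1/3\<^esup> = s Tr_cbrt\<^sup>2 KL_cbrt\<close>.\<close>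

lemma bias_term_le: "Tr * s / H \<le> sqrt (s * K * Tr) + 2 * (s * (Tr_cbrt\<^sup>2 * KL_cbrt))"
proof (cases "H = sqrt (s * Tr / K)")
  case True
  define h where "h = sqrt (s * Tr / K)"
  have "h * h = s * Tr / K" unfolding h_def using s_pos Tr_pos K_pos by simp
  then have "Tr * s = K * h * h" using K_pos by (simp add: field_simps)
  moreover have "H = h" using True by (simp add: h_def)
  moreover have "0 < h" using \<open>H = h\<close> H_ge_2 by simp
  ultimately have "Tr * s / H = K * h" by simp
  then show ?thesis using K_mult_sqrt s_pos Tr_cbrt_bounds KL_cbrt_bounds by (simp add: h_def)
next
  case False
  then have "H = Tr_cbrt / KL4_cbrt"
    using H_def by (simp add: min_def Tr_cbrt_def KL4_cbrt_def powr_divide Tr_pos K_pos ln_4Tr_gt_1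
        split: if_splits)
  then have "Tr * s / H = Tr_cbrt ^ 3 * s / (Tr_cbrt / KL4_cbrt)" using Tr_cbrt_bounds(2) by simp
  also have "\<dots> = s * (Tr_cbrt\<^sup>2 * KL4_cbrt)"
    using Tr_cbrt_bounds(1) KL4_cbrt_bounds(1) by (simp add: field_simps power2_eq_square power3_eq_cube)
  also have "\<dots> \<le> 2 * (s * (Tr_cbrt\<^sup>2 * KL_cbrt))"
    using mult_left_mono[OF Tr_cbrt_KL4_cbrt_le, of s] s_pos by simp
  finally have "Tr * s / H \<le> 2 * (s * (Tr_cbrt\<^sup>2 * KL_cbrt))" .
  moreover have "0 \<le> sqrt (s * K * Tr)" using s_pos K_pos Tr_pos by simp
  ultimately show ?thesis by linarith
qed

lemma count_term_le:
  assumes "Ns \<le> K"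
  shows "(K + Ns + 1) * (H + s) \<le> 3 * sqrt (s * K * Tr) + 3 * (s * (Tr_cbrt\<^sup>2 * KL_cbrt))"
proof -
  have KH: "K * H \<le> sqrt (s * K * Tr)"
    using H_le_sqrt K_pos K_mult_sqrt by (metis mult_left_mono less_imp_le)
  have "K ^ 3 = K\<^sup>2 * K" by (simp add: power3_eq_cube power2_eq_square)
  also have "\<dots> \<le> Tr\<^sup>2 * K" using K_le_Tr K_pos by (intro mult_right_mono power_mono) auto
  also have "\<dots> \<le> Tr\<^sup>2 * (K * ln (Tr / \<delta>))"
    using K_pos ln_Tr_gt_1 by (intro mult_left_mono) auto
  also have "\<dots> = (Tr_cbrt ^ 3)\<^sup>2 * KL_cbrt ^ 3" using Tr_cbrt_bounds(2) KL_cbrt_bounds(2) by simp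
  also have "\<dots> = (Tr_cbrt\<^sup>2 * KL_cbrt) ^ 3" by (simp add: power_mult_distrib flip: power_mult)
  finally have "K ^ 3 \<le> (Tr_cbrt\<^sup>2 * KL_cbrt) ^ 3" .
  moreover have "0 \<le> Tr_cbrt\<^sup>2 * KL_cbrt" using Tr_cbrt_bounds KL_cbrt_bounds by simp
  ultimately have "K \<le> Tr_cbrt\<^sup>2 * KL_cbrt" by (metis power_3_le_imp_le)
  then have Ks: "K * s \<le> s * (Tr_cbrt\<^sup>2 * KL_cbrt)" using s_pos by (simp add: mult.commute)
  have "(K + Ns + 1) * (H + s) \<le> (3 * K) * (H + s)"
    using assms K_ge_1 H_ge_2 s_pos by (intro mult_right_mono) auto
  then show ?thesis using KH Ks by (simp add: algebra_simps)
qed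

lemma bonus_term_le: "sqrt (H * ln (2 * Tr / \<delta>)) * sqrt (K * Tr) \<le> 2 * (Tr_cbrt\<^sup>2 * KL_cbrt)"
proof -
  have "ln (2 * Tr / \<delta>) \<le> ln (4 * Tr / \<delta>)"
    using Tr_pos delta_pos by (simp add: field_simps)
  moreover have "0 < ln (2 * Tr / \<delta>)"
    using Tr_ge_1 delta_pos delta_lt_1 by (simp add: field_simps)
  ultimately have "H * ln (2 * Tr / \<delta>) * (K * Tr) \<le> Tr_cbrt / KL4_cbrt * ln (4 * Tr / \<delta>) * (K * Tr)"
    using H_le_Tr_cbrt_div H_ge_2 K_pos Tr_pos
    by (intro mult_right_mono mult_mono) auto
  also have "\<dots> = Tr_cbrt / KL4_cbrt * KL4_cbrt ^ 3 * Tr_cbrt ^ 3"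
    using KL4_cbrt_bounds(2) Tr_cbrt_bounds(2) by (simp add: algebra_simps)
  also have "\<dots> = (Tr_cbrt\<^sup>2 * KL4_cbrt)\<^sup>2"
    using KL4_cbrt_bounds(1) by (simp add: field_simps power2_eq_square power3_eq_cube)
  finally have "sqrt (H * ln (2 * Tr / \<delta>)) * sqrt (K * Tr) \<le> Tr_cbrt\<^sup>2 * KL4_cbrt"
    using Tr_cbrt_bounds KL4_cbrt_bounds by (simp add: real_sqrt_mult[symmetric] real_le_lsqrt)
  also note Tr_cbrt_KL4_cbrt_le
  finally show ?thesis .
qed

lemma Tr_le_Tr_cbrt_power_4: "Tr \<le> (Tr_cbrt\<^sup>2)\<^sup>2"
proof -
  have "(Tr_cbrt\<^sup>2)\<^sup>2 = Tr_cbrt * Tr_cbrt ^ 3" by (simp add: power2_eq_square power3_eq_cube)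
  then show ?thesis using Tr_cbrt_bounds Tr_pos by simp
qed

lemma noise_term_le:
  "s * sqrt (Tr * ln (2 / \<delta>) / 2) \<le> s * (Tr_cbrt\<^sup>2 * KL_cbrt) + s * sqrt (Tr * ln (1 / \<delta>))"
proof -
  have "ln (2 / \<delta>) = ln 2 + ln (1 / \<delta>)" using delta_pos by (simp add: ln_div)
  moreover have "0 < ln (1 / \<delta>)" using delta_pos delta_lt_1 by simp
  moreover have "ln 2 \<le> (1::real)" using ln_2_less_1 by simp
  ultimately have "ln (2 / \<delta>) \<le> 2 * (1 + ln (1 / \<delta>))" by simp
  then have "Tr * ln (2 / \<delta>) / 2 \<le> Tr + Tr * ln (1 / \<delta>)"
    using Tr_pos mult_left_mono[of "ln (2 / \<delta>)" "2 * (1 + ln (1 / \<delta>))" Tr] by (simp add: algebra_simps)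
  then have "sqrt (Tr * ln (2 / \<delta>) / 2) \<le> sqrt Tr + sqrt (Tr * ln (1 / \<delta>))"
    using Tr_pos delta_pos delta_lt_1
    by (intro order_trans[OF real_sqrt_le_mono sqrt_add_le_add_sqrt]) auto
  also have "sqrt Tr \<le> Tr_cbrt\<^sup>2 * KL_cbrt"
  proof -
    have "sqrt Tr \<le> Tr_cbrt\<^sup>2" using Tr_le_Tr_cbrt_power_4 by (simp add: real_le_lsqrt)
    also have "\<dots> \<le> Tr_cbrt\<^sup>2 * KL_cbrt" using KL_cbrt_bounds(3) by (simp add: mult_le_cancel_left1)
    finally show ?thesis .
  qed
  finally show ?thesis using s_pos by (simp add: mult_left_mono flip: distrib_left)
qed

lemma regret_rate_le:
  assumes "Ns \<le> K"
  shows "Tr * s / H + (K + Ns + 1) * (H + s) + 3 * (8 * s * sqrt (H * ln (2 * Tr / \<delta>)) * sqrt (K * Tr))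
      + s * sqrt (Tr * ln (2 / \<delta>) / 2) + s
    \<le> 60 * (sqrt (s * K * Tr)
      + s * (Tr powr (2/3) * (K * ln (Tr / \<delta>)) powr (1/3) + sqrt (Tr * ln (1 / \<delta>))))"
proof -
  have combine: "a + b + c + d + e \<le> 60 * (R1 + (R2 + R3))"
    if "a \<le> R1 + 2 * R2" "b \<le> 3 * R1 + 3 * R2" "c \<le> 48 * R2" "d \<le> R2 + R3" "e \<le> R2"
      "0 \<le> e" "0 \<le> R1" "0 \<le> R3" for a b c d e R1 R2 R3 :: real
    using that by (smt (verit))
  have "1 * 1 \<le> Tr_cbrt\<^sup>2 * KL_cbrt"
    using Tr_cbrt_bounds KL_cbrt_bounds by (intro mult_mono) (auto simp: one_le_power)
  then have "s \<le> s * (Tr_cbrt\<^sup>2 * KL_cbrt)" using s_pos by simp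
  moreover have "3 * (8 * s * sqrt (H * ln (2 * Tr / \<delta>)) * sqrt (K * Tr))
      \<le> 48 * (s * (Tr_cbrt\<^sup>2 * KL_cbrt))"
    using mult_left_mono[OF bonus_term_le, of "24 * s"] s_pos by (simp add: algebra_simps)
  moreover have "0 \<le> s" "0 \<le> sqrt (s * K * Tr)" "0 \<le> s * sqrt (Tr * ln (1 / \<delta>))"
    using s_pos K_pos Tr_pos delta_pos delta_lt_1 by simp_all
  ultimately show ?thesis
    unfolding rate_eq distrib_left[of s]
    by (intro combine bias_term_le count_term_le[OF assms] noise_term_le)
qed

end

context optimistic_ql begin

lemma prob_regret_le_rate:
  assumes hc: "horizon_choice (real nS * real nA) (real T) sp \<delta> H"
  shows "1 - \<delta> \<le> measure_pmf.prob (ql_run nA r p sp T \<delta> H sel s1 T)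
    {st. regret r J (fst st) \<le> 60 * (sqrt (sp * real nS * real nA * real T)
      + sp * (real T powr (2/3) * (real nS * real nA * ln (real T / \<delta>)) powr (1/3)
        + sqrt (real T * ln (1 / \<delta>))))}"
    (is "_ \<le> measure_pmf.prob ?M {st. regret r J (fst st) \<le> ?rate}")
proof -
  interpret hc: horizon_choice "real nS * real nA" "real T" sp \<delta> H by (rule hc)
  have "real nS * 1 \<le> real nS * real nA" using nA_pos by (intro mult_left_mono) auto
  from hc.regret_rate_le[OF this[simplified]] have "regret_bound \<le> ?rate"
    by (simp add: regret_bound_def noise_dev_def mult.assoc)
  then have "measure_pmf.prob ?M {st. regret r J (fst st) \<le> regret_bound}
      \<le> measure_pmf.prob ?M {st. regret r J (fst st) \<le> ?rate}"
    by (intro measure_pmf.finite_measure_mono) auto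
  then show ?thesis using prob_regret_le_bound[OF hc.K_le_Tr] by linarith
qed

end

theorem theorem1:
  shows "\<exists>C::real. \<forall>nS nA r p J q s1 (T::nat) (\<delta>::real) H sel.
    mdp_wf nS nA r p \<longrightarrow> weakly_communicating nS nA p \<longrightarrow>
    bellman nS nA r p J q \<longrightarrow> s1 < nS \<longrightarrow>
    1 \<le> T \<longrightarrow> 0 < \<delta> \<longrightarrow> \<delta> < 1 \<longrightarrow>
    (\<forall>h s f. sel h s f < nA \<and> (\<forall>b<nA. f b \<le> f (sel h s f))) \<longrightarrow>
    H = min (sqrt (span nS (vfun nA q) * real T / (real nS * real nA)))
            ((real T / (real nS * real nA * ln (4 * real T / \<delta>))) powr (1/3)) \<longrightarrow>
    2 \<le> H \<longrightarrow>
    measure_pmf.prob (ql_run nA r p (span nS (vfun nA q)) T \<delta> H sel s1 T)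
      {st. regret r J (fst st) \<le>
         C * (sqrt (span nS (vfun nA q) * real nS * real nA * real T)
              + span nS (vfun nA q) *
                  (real T powr (2/3) * (real nS * real nA * ln (real T / \<delta>)) powr (1/3)
                   + sqrt (real T * ln (1 / \<delta>))))}
      \<ge> 1 - \<delta>"
proof (intro exI[of _ 60] allI impI)
  fix nS nA :: nat and r :: "nat \<Rightarrow> nat \<Rightarrow> real" and p :: "nat \<Rightarrow> nat \<Rightarrow> nat pmf"
    and J :: real and q :: "nat \<Rightarrow> nat \<Rightarrow> real" and s1 T :: nat and \<delta> H :: real
    and sel :: "(nat \<times> nat) list \<Rightarrow> nat \<Rightarrow> (nat \<Rightarrow> real) \<Rightarrow> nat"
  \<comment> \<open>Weak communication only guarantees that the Bellman equation has a solution; here the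
    solution \<open>(J, q)\<close> is given.\<close>
  assume mdp: "mdp_wf nS nA r p" and "weakly_communicating nS nA p"
    and bellman_sol: "bellman nS nA r p J q" and s1: "s1 < nS" and T: "1 \<le> T"
    and \<delta>: "0 < \<delta>" "\<delta> < 1" and sel: "\<forall>h s f. sel h s f < nA \<and> (\<forall>b<nA. f b \<le> f (sel h s f))"
    and H: "H = min (sqrt (span nS (vfun nA q) * real T / (real nS * real nA)))
      ((real T / (real nS * real nA * ln (4 * real T / \<delta>))) powr (1/3))" "2 \<le> H"
  have "1 \<le> real nS * real nA"
    using mdp by (simp add: mdp_wf_def Suc_le_eq flip: of_nat_mult)
  then have hc: "horizon_choice (real nS * real nA) (real T) (span nS (vfun nA q)) \<delta> H"
    using T \<delta> H by unfold_locales (simp_all add: mult.assoc)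
  interpret optimistic_ql nS nA r p J q s1 T \<delta> H sel
    using mdp bellman_sol s1 T \<delta> sel H horizon_choice.s_pos[OF hc] by unfold_locales auto
  show "1 - \<delta> \<le> measure_pmf.prob (ql_run nA r p (span nS (vfun nA q)) T \<delta> H sel s1 T)
      {st. regret r J (fst st) \<le> 60 * (sqrt (span nS (vfun nA q) * real nS * real nA * real T)
        + span nS (vfun nA q) * (real T powr (2/3) * (real nS * real nA * ln (real T / \<delta>)) powr (1/3)
          + sqrt (real T * ln (1 / \<delta>))))}"
    by (rule prob_regret_le_rate[OF hc])
qed

end
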